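(* Let $L>0$, $V\in C^1([0,L];\mathbb{R})$ and $V_\varepsilon\in C^1([0,L];\mathbb{R})$ ($\varepsilon\in(0,1]$) with $\|V-V_\varepsilon\|_{C^1}\to0$ as $\varepsilon\to0^+$; assume the only $x\in[0,L]$ with $V'(x)=0$ is $\mathbf{x}_0\in(0,L)$ and $V(\mathbf{x}_0)=\min_{[0,L]}V$. Then there is $D>0$ such that for any $\mathbf{y}_0\in[0,L]$ and any $\delta>0$ there is $\varepsilon_0>0$ such that for all $E\in\mathbb{R}$, $\varepsilon\in(0,\varepsilon_0)$ and $\psi$ satisfying $-\varepsilon^2\psi''+V_\varepsilon\psi=E\psi$, $\psi\in H^2(0,L)\cap H^1_0(0,L)$, $\|\psi\|_{L^2(0,L)}=1$, we have $$\|\psi\|_{L^2(U)}\ge e^{-\frac1\varepsilon(d_{A,E}(\mathbf{y}_0)+D\delta)},\qquad U=(\mathbf{y}_0-\delta,\mathbf{y}_0+\delta)\cap[0,L],$$ and $$\frac{\varepsilon}{\sqrt{|E|+1}}|\psi'(0)|\ge e^{-\frac1\varepsilon(d_{A,E}(0)+\delta)},\qquad\frac{\varepsilon}{\sqrt{|E|+1}}|\psi'(L)|\ge e^{-\frac1\varepsilon(d_{A,E}(L)+\delta)}.$$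
   Context: $E_0=\min V$. For $E\ge E_0$, $K_E=\{x\in[0,L]:V(x)\le E\}$ and $d_{A,E}(x)=\inf_{y\in K_E}\left|\int_y^x\sqrt{(V(s)-E)_+}ds\right|$; for $E<E_0$, $d_{A,E}:=d_{A,E_0}$. *)

theory Defs
  imports "HOL-Analysis.Analysis"
begin

definition C1_on :: "real \<Rightarrow> (real \<Rightarrow> real) \<Rightarrow> (real \<Rightarrow> real) \<Rightarrow> bool" where
  "C1_on L f f' \<longleftrightarrow> continuous_on {0..L} f' \<and>
     (\<forall>x\<in>{0..L}. (f has_real_derivative f' x) (at x within {0..L}))"

definition C1_dist :: "real \<Rightarrow> (real \<Rightarrow> real) \<Rightarrow> (real \<Rightarrow> real) \<Rightarrow> (real \<Rightarrow> real) \<Rightarrow> (real \<Rightarrow> real) \<Rightarrow> real" where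
  "C1_dist L f f' g g' = (SUP x\<in>{0..L}. \<bar>f x - g x\<bar>) + (SUP x\<in>{0..L}. \<bar>f' x - g' x\<bar>)"

definition E0 :: "real \<Rightarrow> (real \<Rightarrow> real) \<Rightarrow> real" where
  "E0 L V = (INF x\<in>{0..L}. V x)"

definition KE :: "real \<Rightarrow> (real \<Rightarrow> real) \<Rightarrow> real \<Rightarrow> real set" where
  "KE L V E = {x\<in>{0..L}. V x \<le> E}"

text \<open>Agmon distance d_{A,E}(x) = inf_{y in K_E} |int_y^x sqrt((V-E)_+)|, and d_{A,E} := d_{A,E_0}
  for E < E_0. Since the integrand is nonnegative, |int_y^x| is the integral over [min x y, max x y].\<close>
definition agmon :: "real \<Rightarrow> (real \<Rightarrow> real) \<Rightarrow> real \<Rightarrow> real \<Rightarrow> real" where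
  "agmon L V E x =
     (let E' = max E (E0 L V) in
      INF y\<in>KE L V E'. integral {min y x..max y x} (\<lambda>s. sqrt (max (V s - E') 0)))"

text \<open>psi in H^2(0,L): psi is C^1 on [0,L] with derivative psi1 (H^2 embeds into C^1 in 1D),
  psi1 is absolutely continuous with weak derivative psi2, and psi2 is in L^2(0,L).\<close>
definition H2_on :: "real \<Rightarrow> (real \<Rightarrow> complex) \<Rightarrow> (real \<Rightarrow> complex) \<Rightarrow> (real \<Rightarrow> complex) \<Rightarrow> bool" where
  "H2_on L \<psi> \<psi>1 \<psi>2 \<longleftrightarrow>
     continuous_on {0..L} \<psi>1 \<and>
     (\<forall>x\<in>{0..L}. (\<psi> has_vector_derivative \<psi>1 x) (at x within {0..L})) \<and>
     set_borel_measurable lebesgue {0..L} \<psi>2 \<and>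
     set_integrable lebesgue {0..L} (\<lambda>x. (cmod (\<psi>2 x))\<^sup>2) \<and>
     (\<forall>x\<in>{0..L}. (\<psi>2 has_integral (\<psi>1 x - \<psi>1 0)) {0..x})"

definition L2norm :: "real set \<Rightarrow> (real \<Rightarrow> complex) \<Rightarrow> real" where
  "L2norm U \<psi> = sqrt (LINT x:U|lebesgue. (cmod (\<psi> x))\<^sup>2)"

end

(*
  For a small regularization eta > 0 consider the energy of psi,
    G(t) = eps^2 |psi'(t)|^2 + sqrt ((W(t) - E)^2 + eta^2) |psi(t)|^2,
  where W = V_eps and eps^2 psi'' = (W - E) psi.  Its logarithmic derivative is bounded by
  (2 / eps) sqrt ((W - E)_+) + sqrt eta / eps + |W'| / eta, so between two points G decays at
  most like exp (-(2 / eps) |int sqrt ((W - E)_+)|), up to a factor exp (o(1 / eps)).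
  At a maximum y of |psi|^2 we have W(y) <= E and |psi(y)|^2 >= 1 / L, which bounds G(y) from
  below.  Since the only critical point of V is its minimum, V is quasi-convex, and the action
  of W measured from y exceeds the Agmon distance of V only by an error that vanishes with the
  uniform distance of V and W.  At the endpoints G = eps^2 |psi'|^2, which gives the derivative
  bounds.  For the L^2 bound, |psi''| <= |psi| / (16 h^2) with h ~ eps / sqrt (|E| + 1) forces psi
  to stay close to its tangent line on intervals of length h, so psi carries mass proportional
  to h G there; summing over such intervals near y0 gives the estimate.
*)
theory Submission
  imports Defs
begin

section \<open>Calculus on compact intervals\<close>

lemma has_real_derivative_inner:
  fixes f g :: "real \<Rightarrow> 'a::real_inner"
  assumes "(f has_vector_derivative f') (at x within S)" "(g has_vector_derivative g') (at x within S)"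
  shows "((\<lambda>t. f t \<bullet> g t) has_real_derivative f x \<bullet> g' + f' \<bullet> g x) (at x within S)"
proof -
  have "(\<lambda>h. f x \<bullet> (h *\<^sub>R g') + (h *\<^sub>R f') \<bullet> g x) = (*) (f x \<bullet> g' + f' \<bullet> g x)"
    by (auto simp: algebra_simps)
  with has_derivative_inner[OF assms[unfolded has_vector_derivative_def]] show ?thesis
    by (simp add: has_field_derivative_def)
qed

lemma has_real_derivative_norm_squared:
  fixes f :: "real \<Rightarrow> 'a::real_inner"
  assumes "(f has_vector_derivative f') (at x within S)"
  shows "((\<lambda>t. (norm (f t))\<^sup>2) has_real_derivative 2 * (f x \<bullet> f')) (at x within S)"
  using has_real_derivative_inner[OF assms assms] by (simp add: power2_norm_eq_inner inner_commute)

lemma vector_differentiable_bound: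
  fixes f :: "real \<Rightarrow> 'a::real_normed_vector"
  assumes "convex S" "\<And>t. t \<in> S \<Longrightarrow> (f has_vector_derivative f' t) (at t within S)"
    "\<And>t. t \<in> S \<Longrightarrow> norm (f' t) \<le> B" "x \<in> S" "y \<in> S"
  shows "norm (f x - f y) \<le> B * \<bar>x - y\<bar>"
  using differentiable_bound[OF assms(1) assms(2)[unfolded has_vector_derivative_def] _ assms(4,5)] assms(3)
  by (simp add: onorm_scaleR_left onorm_id)

lemma DERIV_within_nonneg_imp_le:
  fixes f f' :: "real \<Rightarrow> real"
  assumes "a \<le> b"
    and deriv: "\<And>t. t \<in> {a..b} \<Longrightarrow> (f has_real_derivative f' t) (at t within {a..b})"
    and nonneg: "\<And>t. t \<in> {a..b} \<Longrightarrow> 0 \<le> f' t"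
  shows "f a \<le> f b"
proof (rule DERIV_nonneg_imp_increasing_open[OF \<open>a \<le> b\<close>])
  show "continuous_on {a..b} f"
    using deriv by (meson DERIV_continuous continuous_on_eq_continuous_within)
  fix t assume "a < t" "t < b"
  then show "\<exists>y. (f has_real_derivative y) (at t) \<and> 0 \<le> y"
    using deriv[of t] nonneg[of t] by (auto simp: at_within_Icc_at)
qed

lemma gronwall_abs_deriv_bound:
  fixes G G' R r :: "real \<Rightarrow> real"
  assumes dG: "\<And>t. t \<in> {a..b} \<Longrightarrow> (G has_real_derivative G' t) (at t within {a..b})"
    and dR: "\<And>t. t \<in> {a..b} \<Longrightarrow> (R has_real_derivative r t) (at t within {a..b})"
    and rate: "\<And>t. t \<in> {a..b} \<Longrightarrow> \<bar>G' t\<bar> \<le> r t * G t"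
    and nonneg: "\<And>t. t \<in> {a..b} \<Longrightarrow> 0 \<le> G t"
    and x: "x \<in> {a..b}" and y: "y \<in> {a..b}"
  shows "G y * exp (- \<bar>R x - R y\<bar>) \<le> G x"
proof (cases "y \<le> x")
  case True
  have "G y * exp (R y) \<le> G x * exp (R x)"
  proof (rule DERIV_within_nonneg_imp_le[OF True])
    fix t assume t: "t \<in> {y..x}"
    with x y have "t \<in> {a..b}" and sub: "{y..x} \<subseteq> {a..b}" by auto
    from DERIV_mult[OF dG[OF this(1)] DERIV_chain'[OF dR[OF this(1)] DERIV_exp]]
    show "((\<lambda>t. G t * exp (R t)) has_real_derivative (G' t + r t * G t) * exp (R t)) (at t within {y..x})"
      by (rule DERIV_subset[OF _ sub, THEN DERIV_cong]) (simp add: algebra_simps)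
    show "0 \<le> (G' t + r t * G t) * exp (R t)"
      using rate[OF \<open>t \<in> {a..b}\<close>] by simp
  qed
  then have "G y * exp (- (R x - R y)) \<le> G x"
    by (simp add: exp_diff exp_minus field_simps)
  moreover have "G y * exp (- \<bar>R x - R y\<bar>) \<le> G y * exp (- (R x - R y))"
    using nonneg[OF y] by (intro mult_left_mono) auto
  ultimately show ?thesis by linarith
next
  case False
  have "- (G x * exp (- R x)) \<le> - (G y * exp (- R y))"
  proof (rule DERIV_within_nonneg_imp_le[of x y])
    show "x \<le> y" using False by simp
    fix t assume t: "t \<in> {x..y}"
    with x y have "t \<in> {a..b}" and sub: "{x..y} \<subseteq> {a..b}" by auto
    from DERIV_minus[OF DERIV_mult[OF dG[OF this(1)] DERIV_chain'[OF DERIV_minus[OF dR[OF this(1)]] DERIV_exp]]]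
    show "((\<lambda>t. - (G t * exp (- R t))) has_real_derivative (r t * G t - G' t) * exp (- R t)) (at t within {x..y})"
      by (rule DERIV_subset[OF _ sub, THEN DERIV_cong]) (simp add: algebra_simps)
    show "0 \<le> (r t * G t - G' t) * exp (- R t)"
      using rate[OF \<open>t \<in> {a..b}\<close>] by simp
  qed
  then have "G y * exp (- (R y - R x)) \<le> G x"
    by (simp add: exp_diff exp_minus field_simps)
  moreover have "G y * exp (- \<bar>R x - R y\<bar>) \<le> G y * exp (- (R y - R x))"
    using nonneg[OF y] by (intro mult_left_mono) auto
  ultimately show ?thesis by linarith
qed

lemma second_derivative_nonpos_at_max:
  fixes f f' :: "real \<Rightarrow> real"
  assumes df: "\<And>x. x \<in> {a<..<b} \<Longrightarrow> (f has_real_derivative f' x) (at x)"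
    and df': "(f' has_real_derivative f'') (at y)"
    and y: "y \<in> {a<..<b}" and max: "\<And>x. x \<in> {a<..<b} \<Longrightarrow> f x \<le> f y"
  shows "f'' \<le> 0"
proof (rule ccontr)
  assume "\<not> f'' \<le> 0"
  then obtain d where d: "0 < d" and inc: "\<And>h. 0 < h \<Longrightarrow> h < d \<Longrightarrow> f' y < f' (y + h)"
    using DERIV_pos_inc_right[OF df'] by force
  have "f' y = 0"
    by (rule DERIV_local_max[OF df[OF y], where d = "min (y - a) (b - y)"])
       (use y max in \<open>auto simp: abs_less_iff\<close>)
  obtain h where h: "0 < h" "h < d" "y + h < b"
    using field_lbound_gt_zero[OF d, of "b - y"] y by auto
  obtain z where z: "y < z" "z < y + h" and mvt: "f (y + h) - f y = h * f' z"
    using MVT2[of y "y + h" f f'] h y df by force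
  have "0 < f' z" using inc[of "z - y"] z h \<open>f' y = 0\<close> by auto
  with mvt h have "f y < f (y + h)" by (simp add: algebra_simps)
  moreover have "f (y + h) \<le> f y" using max[of "y + h"] h y by auto
  ultimately show False by simp
qed

lemma integral_le_add_const:
  fixes f g :: "real \<Rightarrow> real"
  assumes "a \<le> b" "continuous_on {a..b} f" "continuous_on {a..b} g"
    and "\<And>t. t \<in> {a..b} \<Longrightarrow> f t \<le> g t + k"
  shows "integral {a..b} f \<le> integral {a..b} g + k * (b - a)"
proof -
  have "integral {a..b} f \<le> integral {a..b} (\<lambda>t. g t + k)"
    using assms by (intro integral_le integrable_continuous_real continuous_intros) auto
  also have "\<dots> = integral {a..b} g + k * (b - a)"
    using assms by (subst integral_add) (auto intro!: integrable_continuous_real simp: mult.commute)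
  finally show ?thesis .
qed

lemma integral_ge_sum_of_pieces:
  fixes f :: "real \<Rightarrow> real"
  assumes h: "0 < h" and cont: "continuous_on {s..s + real N * h} f"
    and piece: "\<And>i. i < N \<Longrightarrow> \<beta> \<le> integral {s + real i * h..s + real i * h + h} f"
  shows "real N * \<beta> \<le> integral {s..s + real N * h} f"
  using cont piece
proof (induction N)
  case (Suc N)
  have split: "s + real (Suc N) * h = s + real N * h + h" by (simp add: algebra_simps)
  have "continuous_on {s..s + real N * h} f"
    by (rule continuous_on_subset[OF Suc.prems(1)]) (use h in \<open>auto simp: algebra_simps\<close>)
  with Suc.prems(2) have "real N * \<beta> \<le> integral {s..s + real N * h} f"
    by (intro Suc.IH) auto
  moreover have "\<beta> \<le> integral {s + real N * h..s + real N * h + h} f"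
    using Suc.prems(2) by simp
  moreover have "integral {s..s + real N * h} f + integral {s + real N * h..s + real N * h + h} f
      = integral {s..s + real N * h + h} f"
    using Suc.prems(1) h unfolding split
    by (intro Henstock_Kurzweil_Integration.integral_combine integrable_continuous_real) auto
  ultimately show ?case by (simp add: split algebra_simps)
qed simp

lemma integral_between_eq_abs_diff:
  fixes f :: "real \<Rightarrow> real"
  assumes cont: "continuous_on {a..b} f" and nonneg: "\<And>t. t \<in> {a..b} \<Longrightarrow> 0 \<le> f t"
    and u: "u \<in> {a..b}" and v: "v \<in> {a..b}"
  shows "integral {min u v..max u v} f = \<bar>integral {a..v} f - integral {a..u} f\<bar>"
proof -
  have *: "integral {p..q} f = \<bar>integral {a..q} f - integral {a..p} f\<bar>"
    if "p \<le> q" "p \<in> {a..b}" "q \<in> {a..b}" for p q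
  proof -
    have "continuous_on {a..q} f" by (rule continuous_on_subset[OF cont]) (use that in auto)
    then have "integral {a..p} f + integral {p..q} f = integral {a..q} f"
      "0 \<le> integral {p..q} f"
      using that nonneg
      by (auto intro!: Henstock_Kurzweil_Integration.integral_combine integral_nonneg
          integrable_continuous_real intro: continuous_on_subset)
    then show ?thesis by linarith
  qed
  show ?thesis
    using *[of u v] *[of v u] u v by (cases "u \<le> v") (auto simp: abs_minus_commute)
qed

lemma has_integral_norm_affine_squared:
  fixes A B :: "'a::real_inner"
  assumes "0 \<le> h"
  shows "((\<lambda>t. (norm (A + (t - x) *\<^sub>R B))\<^sup>2) has_integral
    h * ((norm A)\<^sup>2 + h * (A \<bullet> B) + (h * norm B)\<^sup>2 / 3)) {x..x+h}"
proof -
  define \<Phi> where "\<Phi> t = (norm A)\<^sup>2 * (t - x) + (A \<bullet> B) * (t - x)\<^sup>2 + (norm B)\<^sup>2 * (t - x) ^ 3 / 3" for t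
  have "((\<lambda>t. (norm (A + (t - x) *\<^sub>R B))\<^sup>2) has_integral (\<Phi> (x + h) - \<Phi> x)) {x..x+h}"
  proof (rule fundamental_theorem_of_calculus)
    fix t assume "t \<in> {x..x+h}"
    have "(norm (A + (t - x) *\<^sub>R B))\<^sup>2 = (norm A)\<^sup>2 + 2 * (t - x) * (A \<bullet> B) + (t - x)\<^sup>2 * (norm B)\<^sup>2"
      by (simp only: power2_norm_eq_inner)
        (simp add: inner_add_left inner_add_right inner_commute power2_eq_square algebra_simps)
    then show "(\<Phi> has_vector_derivative (norm (A + (t - x) *\<^sub>R B))\<^sup>2) (at t within {x..x+h})"
      unfolding \<Phi>_def has_real_derivative_iff_has_vector_derivative[symmetric]
      by (auto intro!: derivative_eq_intros simp: power2_eq_square field_simps)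
  qed (use assms in auto)
  moreover have "\<Phi> (x + h) - \<Phi> x = h * ((norm A)\<^sup>2 + h * (A \<bullet> B) + (h * norm B)\<^sup>2 / 3)"
    by (simp add: \<Phi>_def power2_eq_square power3_eq_cube algebra_simps)
  ultimately show ?thesis by simp
qed

lemma taylor_remainder_le:
  fixes c c' c'' :: "real \<Rightarrow> 'a::real_normed_vector"
  assumes h: "0 < h"
    and dc: "\<And>t. t \<in> {x..x+h} \<Longrightarrow> (c has_vector_derivative c' t) (at t within {x..x+h})"
    and dc': "\<And>t. t \<in> {x..x+h} \<Longrightarrow> (c' has_vector_derivative c'' t) (at t within {x..x+h})"
    and small: "\<And>t. t \<in> {x..x+h} \<Longrightarrow> 16 * h\<^sup>2 * norm (c'' t) \<le> norm (c t)"
    and t: "t \<in> {x..x+h}"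
  shows "norm (c t - c x - (t - x) *\<^sub>R c' x) \<le> (norm (c x) + h * norm (c' x)) / 15"
proof -
  define I where "I = {x..x+h}"
  have x: "x \<in> I" and cvx: "convex I" using h by (auto simp: I_def)
  have "continuous_on I c"
    unfolding I_def using dc by (meson has_vector_derivative_continuous continuous_on_eq_continuous_within)
  then obtain tm where tm: "tm \<in> I" and tmax: "\<And>t. t \<in> I \<Longrightarrow> norm (c t) \<le> norm (c tm)"
    using continuous_attains_sup[of I "\<lambda>t. norm (c t)"] continuous_on_norm h by (force simp: I_def)
  define M where "M = norm (c tm)"
  have c'_close: "norm (c' s - c' x) \<le> M / (16 * h)" if "s \<in> I" for s
  proof -
    have "norm (c' s - c' x) \<le> M / (16 * h\<^sup>2) * \<bar>s - x\<bar>"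
    proof (rule vector_differentiable_bound[OF cvx _ _ that x])
      fix r assume "r \<in> I"
      then show "(c' has_vector_derivative c'' r) (at r within I)" by (simp add: dc' I_def)
      show "norm (c'' r) \<le> M / (16 * h\<^sup>2)"
        using small[of r] tmax[of r] \<open>r \<in> I\<close> h by (simp add: I_def M_def field_simps)
    qed
    also have "\<dots> \<le> M / (16 * h\<^sup>2) * h"
      using that h by (intro mult_left_mono) (auto simp: I_def M_def)
    finally show ?thesis using h by (simp add: power2_eq_square)
  qed
  have remainder: "norm (c s - c x - (s - x) *\<^sub>R c' x) \<le> M / 16" if "s \<in> I" for s
  proof -
    have "closed_segment x s \<subseteq> I"
      using that x cvx by (simp add: closed_segment_subset)
    from vector_differentiable_bound_linearization[of I c c', OF _ this c'_close x]
    have "norm (c s - c x - (s - x) *\<^sub>R c' x) \<le> \<bar>s - x\<bar> * (M / (16 * h))"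
      by (simp add: I_def dc)
    also have "\<dots> \<le> h * (M / (16 * h))"
      using that h by (intro mult_right_mono) (auto simp: I_def M_def)
    finally show ?thesis using h by simp
  qed
  have "M \<le> norm (c x + (tm - x) *\<^sub>R c' x) + norm (c tm - c x - (tm - x) *\<^sub>R c' x)"
    using norm_triangle_ineq[of "c x + (tm - x) *\<^sub>R c' x" "c tm - c x - (tm - x) *\<^sub>R c' x"]
    by (simp add: M_def)
  also have "norm (c x + (tm - x) *\<^sub>R c' x) \<le> norm (c x) + \<bar>tm - x\<bar> * norm (c' x)"
    using norm_triangle_ineq[of "c x" "(tm - x) *\<^sub>R c' x"] by simp
  finally have "M \<le> norm (c x) + \<bar>tm - x\<bar> * norm (c' x) + norm (c tm - c x - (tm - x) *\<^sub>R c' x)"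
    by simp
  moreover have "\<bar>tm - x\<bar> * norm (c' x) \<le> h * norm (c' x)"
    using tm by (intro mult_right_mono) (auto simp: I_def)
  ultimately have "M \<le> norm (c x) + h * norm (c' x) + M / 16" using remainder[OF tm] by linarith
  then show ?thesis using remainder[of t] t by (simp add: I_def)
qed

lemma quadratic_form_lower_bound:
  fixes u v :: real
  shows "(u\<^sup>2 + v\<^sup>2) / 16 \<le> u\<^sup>2 + u * v + v\<^sup>2 / 3"
proof -
  have "0 \<le> 15/16 * (u + 8/15 * v)\<^sup>2 + (13/48 - 4/15) * v\<^sup>2"
    by (intro add_nonneg_nonneg mult_nonneg_nonneg) auto
  then show ?thesis by (simp add: power2_eq_square algebra_simps)
qed

text \<open>A solution of c'' = O(c / h^2) cannot concentrate: on an interval of length h it is close to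
  its tangent line, so it carries mass comparable to h times its value and its scaled slope.\<close>
lemma interval_mass_lower_bound:
  fixes c c' c'' :: "real \<Rightarrow> 'a::real_inner"
  assumes h: "0 < h"
    and dc: "\<And>t. t \<in> {x..x+h} \<Longrightarrow> (c has_vector_derivative c' t) (at t within {x..x+h})"
    and dc': "\<And>t. t \<in> {x..x+h} \<Longrightarrow> (c' has_vector_derivative c'' t) (at t within {x..x+h})"
    and small: "\<And>t. t \<in> {x..x+h} \<Longrightarrow> 16 * h\<^sup>2 * norm (c'' t) \<le> norm (c t)"
  shows "h / 64 * ((norm (c x))\<^sup>2 + h\<^sup>2 * (norm (c' x))\<^sup>2) \<le> integral {x..x+h} (\<lambda>t. (norm (c t))\<^sup>2)"
proof -
  define A where "A = c x"
  define B where "B = c' x"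
  define k where "k = ((norm A + h * norm B) / 15)\<^sup>2"
  define X where "X = (norm A)\<^sup>2 + (h * norm B)\<^sup>2"
  define Q where "Q = (norm A)\<^sup>2 + h * (A \<bullet> B) + (h * norm B)\<^sup>2 / 3"
  have pointwise: "(norm (A + (t - x) *\<^sub>R B))\<^sup>2 / 2 - k \<le> (norm (c t))\<^sup>2" if t: "t \<in> {x..x+h}" for t
  proof -
    define g where "g = c t - c x - (t - x) *\<^sub>R c' x"
    have "c t - g = A + (t - x) *\<^sub>R B" by (simp add: g_def A_def B_def)
    with norm_triangle_ineq4[of "c t" g] have "norm (A + (t - x) *\<^sub>R B) \<le> norm (c t) + norm g"
      by simp
    then have "(norm (A + (t - x) *\<^sub>R B))\<^sup>2 \<le> (norm (c t) + norm g)\<^sup>2"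
      by (rule power_mono) simp
    also have "\<dots> \<le> 2 * (norm (c t))\<^sup>2 + 2 * (norm g)\<^sup>2"
      using sum_squares_bound[of "norm (c t)" "norm g"] by (simp add: power2_sum)
    finally have "(norm (A + (t - x) *\<^sub>R B))\<^sup>2 \<le> 2 * (norm (c t))\<^sup>2 + 2 * (norm g)\<^sup>2" .
    moreover have "(norm g)\<^sup>2 \<le> k"
      unfolding k_def g_def A_def B_def by (rule power_mono[OF taylor_remainder_le[OF h dc dc' small t] norm_ge_zero])
    ultimately show ?thesis by linarith
  qed
  have "((\<lambda>t. (norm (A + (t - x) *\<^sub>R B))\<^sup>2 / 2 - k) has_integral h * Q / 2 - h * k) {x..x+h}"
    using has_integral_diff[OF has_integral_divide[OF has_integral_norm_affine_squared]
        has_integral_const_real[of k x "x + h"]] h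
    by (simp add: Q_def mult.commute)
  moreover have "continuous_on {x..x+h} c"
    using dc by (meson has_vector_derivative_continuous continuous_on_eq_continuous_within)
  then have "((\<lambda>t. (norm (c t))\<^sup>2) has_integral integral {x..x+h} (\<lambda>t. (norm (c t))\<^sup>2)) {x..x+h}"
    by (intro integrable_integral integrable_continuous_real continuous_intros)
  ultimately have mass: "h * Q / 2 - h * k \<le> integral {x..x+h} (\<lambda>t. (norm (c t))\<^sup>2)"
    using pointwise by (rule has_integral_le)
  have "X / 16 \<le> Q"
  proof -
    have "norm A * - (h * norm B) = h * - (norm A * norm B)" by simp
    also have "\<dots> \<le> h * (A \<bullet> B)"
      using Cauchy_Schwarz_ineq2[of A B] h by (intro mult_left_mono) auto
    finally show ?thesis
      using quadratic_form_lower_bound[of "norm A" "- (h * norm B)"] unfolding X_def Q_def power2_minus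
      by linarith
  qed
  moreover have "k \<le> 2 * X / 225"
  proof -
    have "(norm A + h * norm B)\<^sup>2 \<le> 2 * X"
      using sum_squares_bound[of "norm A" "h * norm B"] unfolding X_def power2_sum by simp
    then show ?thesis by (simp add: k_def power_divide)
  qed
  moreover have "0 \<le> X" by (simp add: X_def)
  ultimately have "h * (X / 64) \<le> h * (Q / 2 - k)"
    using h by (intro mult_left_mono) auto
  also have "h * (Q / 2 - k) = h * Q / 2 - h * k" by (simp add: algebra_simps)
  finally have "h * (X / 64) \<le> integral {x..x+h} (\<lambda>t. (norm (c t))\<^sup>2)"
    using mass by linarith
  then show ?thesis by (simp add: X_def A_def B_def power_mult_distrib)
qed

lemma add_regularized_abs_div_sqrt_le:
  fixes q \<eta> :: real
  assumes eta: "0 < \<eta>"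
  defines "m \<equiv> sqrt (q\<^sup>2 + \<eta>\<^sup>2)"
  shows "(q + m) / sqrt m \<le> 2 * sqrt (max q 0) + sqrt \<eta>"
proof -
  have m_eta: "\<eta> \<le> m" and m_q: "\<bar>q\<bar> \<le> m"
    unfolding m_def using eta by (simp_all add: real_le_rsqrt)
  have sqrt_m: "0 < sqrt m" using m_eta eta by simp
  show ?thesis
  proof (cases "q \<le> 0")
    case True
    have "(m + q) * (m - q) = \<eta>\<^sup>2"
      unfolding m_def by (simp add: power2_eq_square algebra_simps)
    moreover have "(m + q) * m \<le> (m + q) * (m - q)"
      using True m_q by (intro mult_left_mono) auto
    ultimately have "q + m \<le> \<eta>\<^sup>2 / m" using m_eta eta by (simp add: field_simps)
    then have "(q + m) / sqrt m \<le> \<eta>\<^sup>2 / m / sqrt m"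
      using sqrt_m by (intro divide_right_mono) auto
    also have "\<dots> = \<eta>\<^sup>2 / (m * sqrt m)" by simp
    also have "\<dots> \<le> \<eta>\<^sup>2 / (\<eta> * sqrt \<eta>)"
      using m_eta eta by (intro divide_left_mono mult_mono mult_pos_pos) auto
    also have "\<dots> = sqrt \<eta>"
      using eta by (simp add: power2_eq_square real_div_sqrt)
    finally show ?thesis using True by simp
  next
    case False
    have "q\<^sup>2 + \<eta>\<^sup>2 \<le> (q + \<eta>)\<^sup>2" using False eta by (simp add: power2_eq_square algebra_simps)
    then have "m \<le> sqrt ((q + \<eta>)\<^sup>2)" unfolding m_def by (rule real_sqrt_le_mono)
    then have "m \<le> q + \<eta>" using False eta by simp
    then have "(q + m) / sqrt m \<le> 2 * (q / sqrt m) + \<eta> / sqrt m"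
      using sqrt_m by (simp add: divide_right_mono add_divide_distrib[symmetric])
    also have "\<dots> \<le> 2 * (q / sqrt q) + \<eta> / sqrt \<eta>"
      using False m_q m_eta eta by (intro add_mono mult_left_mono divide_left_mono) auto
    also have "\<dots> = 2 * sqrt q + sqrt \<eta>"
      using False eta by (simp add: real_div_sqrt)
    finally show ?thesis using False by simp
  qed
qed

lemma energy_rate_bound:
  fixes q q' p u v \<epsilon> \<eta> K :: real
  assumes eps: "0 < \<epsilon>" and eta: "0 < \<eta>" and K: "\<bar>q'\<bar> \<le> K"
    and p: "\<bar>p\<bar> \<le> u * v" and u: "0 \<le> u" and v: "0 \<le> v"
  defines "m \<equiv> sqrt (q\<^sup>2 + \<eta>\<^sup>2)"
  shows "\<bar>2 * (q + m) * p + q * q' / m * u\<^sup>2\<bar>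
    \<le> (2 / \<epsilon> * sqrt (max q 0) + sqrt \<eta> / \<epsilon> + K / \<eta>) * (\<epsilon>\<^sup>2 * v\<^sup>2 + m * u\<^sup>2)"
proof -
  define G where "G = \<epsilon>\<^sup>2 * v\<^sup>2 + m * u\<^sup>2"
  have m_eta: "\<eta> \<le> m" and m_q: "\<bar>q\<bar> \<le> m"
    unfolding m_def using eta by (simp_all add: real_le_rsqrt)
  have m: "0 < m" using m_eta eta by simp
  have "0 \<le> q + m" using m_q by linarith
  have "2 * \<bar>p\<bar> * (\<epsilon> * sqrt m) \<le> G"
  proof -
    have "2 * \<bar>p\<bar> * (\<epsilon> * sqrt m) \<le> 2 * (u * v) * (\<epsilon> * sqrt m)"
      using p eps m by (intro mult_right_mono mult_left_mono) auto
    also have "\<dots> = 2 * (\<epsilon> * v) * (sqrt m * u)" by (simp add: algebra_simps)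
    also have "\<dots> \<le> (\<epsilon> * v)\<^sup>2 + (sqrt m * u)\<^sup>2" by (rule sum_squares_bound)
    finally show ?thesis using m by (simp add: G_def power_mult_distrib)
  qed
  then have "2 * \<bar>p\<bar> \<le> G / (\<epsilon> * sqrt m)" using eps m by (simp add: field_simps)
  then have "(q + m) * (2 * \<bar>p\<bar>) \<le> (q + m) * (G / (\<epsilon> * sqrt m))"
    using \<open>0 \<le> q + m\<close> by (rule mult_left_mono)
  also have "\<dots> = (q + m) / sqrt m / \<epsilon> * G" by simp
  also have "\<dots> \<le> (2 * sqrt (max q 0) + sqrt \<eta>) / \<epsilon> * G"
    using add_regularized_abs_div_sqrt_le[OF eta, of q] eps m
    by (intro mult_right_mono divide_right_mono) (auto simp: G_def m_def)
  finally have "(q + m) * (2 * \<bar>p\<bar>) \<le> (2 / \<epsilon> * sqrt (max q 0) + sqrt \<eta> / \<epsilon>) * G"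
    by (simp add: add_divide_distrib)
  moreover have "\<bar>2 * (q + m) * p\<bar> = (q + m) * (2 * \<bar>p\<bar>)"
    using \<open>0 \<le> q + m\<close> by (simp add: abs_mult)
  ultimately have first: "\<bar>2 * (q + m) * p\<bar> \<le> (2 / \<epsilon> * sqrt (max q 0) + sqrt \<eta> / \<epsilon>) * G"
    by simp
  have "\<bar>q\<bar> / m \<le> 1" using m_q m by simp
  have "\<bar>q * q' / m * u\<^sup>2\<bar> = \<bar>q\<bar> / m * \<bar>q'\<bar> * u\<^sup>2" using m by (simp add: abs_mult)
  also have "\<dots> \<le> 1 * K * u\<^sup>2"
    using \<open>\<bar>q\<bar> / m \<le> 1\<close> K by (intro mult_right_mono mult_mono) auto
  also have "\<dots> \<le> m / \<eta> * K * u\<^sup>2"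
    using m_eta eta K by (intro mult_right_mono) auto
  also have "\<dots> \<le> K / \<eta> * G"
    using eta K by (simp add: G_def algebra_simps)
  finally have "\<bar>q * q' / m * u\<^sup>2\<bar> \<le> K / \<eta> * G" .
  with first abs_triangle_ineq[of "2 * (q + m) * p" "q * q' / m * u\<^sup>2"] show ?thesis
    unfolding G_def[symmetric] distrib_right by (meson add_mono order_trans)
qed

lemma exp_absorb_prefactor:
  fixes c \<epsilon> \<delta> k \<rho> \<sigma> A X :: real
  assumes c: "0 < c" and eps: "0 < \<epsilon>" and small: "\<epsilon> * (k + \<bar>ln c\<bar>) \<le> \<delta>"
    and slack: "2 * \<rho> + \<sigma> \<le> \<delta>" and X: "X \<le> 2 / \<epsilon> * (A + \<rho>) + \<sigma> / \<epsilon> + k"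
  shows "exp (- (2 / \<epsilon>) * (A + \<delta>)) \<le> c * exp (- X)"
proof -
  have absorb: "k + \<bar>ln c\<bar> \<le> \<delta> / \<epsilon>" using small eps by (simp add: field_simps)
  have "(2 * \<rho> + \<sigma>) / \<epsilon> \<le> \<delta> / \<epsilon>"
    using slack eps by (simp add: divide_right_mono)
  moreover have "2 / \<epsilon> * (A + \<rho>) + \<sigma> / \<epsilon> = 2 / \<epsilon> * A + (2 * \<rho> + \<sigma>) / \<epsilon>"
    by (simp add: add_divide_distrib distrib_left)
  ultimately have "2 / \<epsilon> * (A + \<rho>) + \<sigma> / \<epsilon> \<le> 2 / \<epsilon> * A + \<delta> / \<epsilon>"
    by linarith
  moreover have "- (2 / \<epsilon>) * (A + \<delta>) = - (2 / \<epsilon> * A + \<delta> / \<epsilon>) - \<delta> / \<epsilon>"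
    by (simp add: algebra_simps add_divide_distrib)
  ultimately have "- (2 / \<epsilon>) * (A + \<delta>) \<le> ln c - X"
    using X absorb by linarith
  then have "exp (- (2 / \<epsilon>) * (A + \<delta>)) \<le> exp (ln c - X)" by simp
  also have "\<dots> = c * exp (- X)" using c by (simp add: exp_diff exp_minus field_simps)
  finally show ?thesis .
qed

lemma exp_half_le_sqrt:
  fixes \<epsilon> A X :: real
  assumes "exp (- (2 / \<epsilon>) * A) \<le> X"
  shows "exp (- (1 / \<epsilon>) * A) \<le> sqrt X"
proof -
  have "exp (- (2 / \<epsilon>) * A) = (exp (- (1 / \<epsilon>) * A))\<^sup>2"
    by (simp add: power2_eq_square field_simps flip: exp_add)
  then have "exp (- (1 / \<epsilon>) * A) = sqrt (exp (- (2 / \<epsilon>) * A))" by simp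
  with assms show ?thesis by (simp add: real_sqrt_le_mono)
qed

lemma exp_half_le_scaled:
  fixes \<epsilon> A c v :: real
  assumes "c * exp (- (2 / \<epsilon>) * A) \<le> \<epsilon>\<^sup>2 * v\<^sup>2" and "0 < c" "0 < \<epsilon>" "0 \<le> v"
  shows "exp (- (1 / \<epsilon>) * A) \<le> \<epsilon> / sqrt c * v"
proof -
  have "exp (- (2 / \<epsilon>) * A) \<le> (\<epsilon> / sqrt c * v)\<^sup>2"
    using assms by (simp add: power_mult_distrib power_divide field_simps)
  from exp_half_le_sqrt[OF this] show ?thesis using assms by simp
qed

lemma regularization_parameters:
  fixes L \<delta> :: real
  assumes L: "0 < L" and \<delta>: "0 < \<delta>"
  obtains \<eta> \<tau> where "0 < \<eta>" "\<eta> \<le> 1" "0 < \<tau>" "\<tau> \<le> 1"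
    "2 * (L * (sqrt (2 * \<tau>) + sqrt (3 * \<tau>))) + sqrt \<eta> * L \<le> \<delta>"
proof -
  define \<eta> where "\<eta> = (min 1 (\<delta> / (2 * L)))\<^sup>2"
  define \<tau> where "\<tau> = min 1 ((\<delta> / (8 * L))\<^sup>2 / 3)"
  have r: "0 < min 1 (\<delta> / (2 * L))" "min 1 (\<delta> / (2 * L)) \<le> 1" "min 1 (\<delta> / (2 * L)) \<le> \<delta> / (2 * L)"
    using \<delta> L by auto
  then have "min 1 (\<delta> / (2 * L)) * L \<le> \<delta> / (2 * L) * L"
    using L by (intro mult_right_mono) auto
  with r have eta: "0 < \<eta>" "\<eta> \<le> 1" "sqrt \<eta> * L \<le> \<delta> / 2"
    using L by (auto simp: \<eta>_def power_le_one)
  have "0 < \<tau>" "\<tau> \<le> 1" using \<delta> L by (simp_all add: \<tau>_def)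
  have "sqrt (3 * \<tau>) \<le> \<delta> / (8 * L)"
    using \<delta> L by (simp add: \<tau>_def real_sqrt_le_iff real_le_lsqrt)
  moreover have "sqrt (2 * \<tau>) \<le> sqrt (3 * \<tau>)" using \<open>0 < \<tau>\<close> by simp
  ultimately have "sqrt (2 * \<tau>) + sqrt (3 * \<tau>) \<le> 2 * (\<delta> / (8 * L))" by linarith
  then have "L * (sqrt (2 * \<tau>) + sqrt (3 * \<tau>)) \<le> L * (2 * (\<delta> / (8 * L)))"
    using L by (intro mult_left_mono) auto
  with eta L show ?thesis
    using \<open>0 < \<tau>\<close> \<open>\<tau> \<le> 1\<close> by (intro that[of \<eta> \<tau>]) auto
qed

lemma interval_near_point:
  fixes y0 len L :: real
  assumes "y0 \<in> {0..L}" "0 \<le> len" "2 * len \<le> L"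
  obtains s where "0 \<le> s" "s + len \<le> L" "\<And>x. x \<in> {s..s+len} \<Longrightarrow> \<bar>x - y0\<bar> \<le> len"
proof (cases "y0 + len \<le> L")
  case True
  then show ?thesis using assms by (intro that[of y0]) auto
next
  case False
  then show ?thesis using assms by (intro that[of "y0 - len"]) auto
qed

lemma C1_dist_bounds:
  assumes V: "C1_on L V V'" and W: "C1_on L W W'" and x: "x \<in> {0..L}"
  shows "\<bar>V x - W x\<bar> \<le> C1_dist L V V' W W'" and "\<bar>V' x - W' x\<bar> \<le> C1_dist L V V' W W'"
proof -
  have cont: "continuous_on {0..L} f" if "C1_on L f f'" for f f'
    using that unfolding C1_on_def by (meson DERIV_continuous continuous_on_eq_continuous_within)
  have bdd: "bdd_above ((\<lambda>x. \<bar>f x - g x\<bar>) ` {0..L})"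
    if "continuous_on {0..L} f" "continuous_on {0..L} g" for f g :: "real \<Rightarrow> real"
    using that by (intro bounded_imp_bdd_above compact_imp_bounded compact_continuous_image continuous_intros) auto
  have sup: "\<bar>f x - g x\<bar> \<le> (SUP x\<in>{0..L}. \<bar>f x - g x\<bar>)"
    if "continuous_on {0..L} f" "continuous_on {0..L} g" for f g :: "real \<Rightarrow> real"
    using x bdd[OF that] by (rule cSUP_upper)
  have "continuous_on {0..L} V'" "continuous_on {0..L} W'" using V W by (auto simp: C1_on_def)
  note deriv_bound = sup[OF this] order_trans[OF abs_ge_zero sup[OF this]]
  note value_bound = sup[OF cont[OF V] cont[OF W]] order_trans[OF abs_ge_zero sup[OF cont[OF V] cont[OF W]]]
  show "\<bar>V x - W x\<bar> \<le> C1_dist L V V' W W'" "\<bar>V' x - W' x\<bar> \<le> C1_dist L V V' W W'"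
    using deriv_bound value_bound unfolding C1_dist_def by linarith+
qed

lemma L2norm_continuous:
  fixes \<psi> :: "real \<Rightarrow> complex"
  assumes cont: "continuous_on {0..L} \<psi>" and U: "U \<subseteq> {0..L}" "U \<in> sets lebesgue"
  shows "(\<lambda>x. (norm (\<psi> x))\<^sup>2) integrable_on U"
    and "L2norm U \<psi> = sqrt (integral U (\<lambda>x. (norm (\<psi> x))\<^sup>2))"
proof -
  have "set_integrable lebesgue {0..L} (\<lambda>x. (norm (\<psi> x))\<^sup>2)"
    using absolutely_integrable_continuous_real[of 0 L "\<lambda>x. (norm (\<psi> x))\<^sup>2"] cont
    by (simp add: continuous_intros)
  then have "set_integrable lebesgue U (\<lambda>x. (norm (\<psi> x))\<^sup>2)"
    by (rule set_integrable_subset) (use U in auto)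
  from set_lebesgue_integral_eq_integral[OF this]
  show "(\<lambda>x. (norm (\<psi> x))\<^sup>2) integrable_on U"
    and "L2norm U \<psi> = sqrt (integral U (\<lambda>x. (norm (\<psi> x))\<^sup>2))"
    by (simp_all add: L2norm_def)
qed

lemma L2norm_ge_subinterval:
  fixes \<psi> :: "real \<Rightarrow> complex"
  assumes cont: "continuous_on {0..L} \<psi>" and sub: "{s..t} \<subseteq> U" "U \<subseteq> {0..L}" and U: "U \<in> sets lebesgue"
  shows "sqrt (integral {s..t} (\<lambda>x. (norm (\<psi> x))\<^sup>2)) \<le> L2norm U \<psi>"
proof -
  have "{s..t} \<subseteq> {0..L}" using sub by blast
  then have "integral {s..t} (\<lambda>x. (norm (\<psi> x))\<^sup>2) \<le> integral U (\<lambda>x. (norm (\<psi> x))\<^sup>2)"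
    using sub by (intro integral_subset_le L2norm_continuous(1)[OF cont] U) auto
  then show ?thesis
    using L2norm_continuous(2)[OF cont sub(2) U] by simp
qed

section \<open>The Agmon action and the single-well potential\<close>

definition agmon_action :: "(real \<Rightarrow> real) \<Rightarrow> real \<Rightarrow> real \<Rightarrow> real" where
  "agmon_action W E x = integral {0..x} (\<lambda>s. sqrt (max (W s - E) 0))"

lemma agmon_action_diff_eq_integral:
  assumes W: "continuous_on {0..L} W" and u: "u \<in> {0..L}" and v: "v \<in> {0..L}"
  shows "\<bar>agmon_action W E v - agmon_action W E u\<bar> = integral {min u v..max u v} (\<lambda>s. sqrt (max (W s - E) 0))"
  using integral_between_eq_abs_diff[OF _ _ u v, of "\<lambda>s. sqrt (max (W s - E) 0)"] W
  by (simp add: agmon_action_def continuous_intros)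

lemma agmon_action_diff_le_const:
  assumes W: "continuous_on {0..L} W" and u: "u \<in> {0..L}" and v: "v \<in> {0..L}" and "0 \<le> C"
    and bound: "\<And>t. t \<in> {min u v..max u v} \<Longrightarrow> W t - E \<le> C"
  shows "\<bar>agmon_action W E v - agmon_action W E u\<bar> \<le> sqrt C * \<bar>v - u\<bar>"
proof -
  have sub: "{min u v..max u v} \<subseteq> {0..L}" using u v by auto
  have "integral {min u v..max u v} (\<lambda>s. sqrt (max (W s - E) 0))
      \<le> integral {min u v..max u v} (\<lambda>_. 0) + sqrt C * (max u v - min u v)"
    using bound \<open>0 \<le> C\<close> continuous_on_subset[OF W sub]
    by (intro integral_le_add_const continuous_intros) (auto simp: real_sqrt_le_mono)
  also have "max u v - min u v = \<bar>v - u\<bar>" by (simp add: max_def min_def)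
  finally show ?thesis using agmon_action_diff_eq_integral[OF W u v] by simp
qed

locale single_well =
  fixes L :: real and V V' :: "real \<Rightarrow> real" and x0 :: real
  assumes V_C1: "C1_on L V V'"
    and x0_in: "x0 \<in> {0..L}"
    and crit: "\<And>x. x \<in> {0..L} \<Longrightarrow> V' x = 0 \<longleftrightarrow> x = x0"
    and x0_min: "V x0 = (INF x\<in>{0..L}. V x)"
begin

lemma V_cont: "continuous_on {0..L} V"
  using V_C1 unfolding C1_on_def by (meson DERIV_continuous continuous_on_eq_continuous_within)

lemma V_min: "x \<in> {0..L} \<Longrightarrow> V x0 \<le> V x"
  unfolding x0_min
  by (intro cINF_lower bounded_imp_bdd_below compact_imp_bounded compact_continuous_image V_cont) auto

text \<open>An interior maximum of V would be a critical point, hence the minimum x0.\<close>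
lemma V_le_max_endpoints:
  assumes z: "z \<in> {0..L}" and y: "y \<in> {0..L}" and s: "s \<in> {min z y..max z y}"
  shows "V s \<le> max (V z) (V y)"
proof (rule ccontr)
  assume A: "\<not> V s \<le> max (V z) (V y)"
  define I where "I = {min z y..max z y}"
  have sub: "I \<subseteq> {0..L}" using z y by (auto simp: I_def)
  have "\<exists>w\<in>I. \<forall>t\<in>I. V t \<le> V w"
    using continuous_on_subset[OF V_cont sub] by (intro continuous_attains_sup) (auto simp: I_def)
  then obtain w where w: "w \<in> I" and wmax: "\<And>t. t \<in> I \<Longrightarrow> V t \<le> V w"
    by blast
  have "V s \<le> V w" using wmax s by (simp add: I_def)
  with A have "w \<noteq> min z y" "w \<noteq> max z y" by (auto simp: min_def max_def split: if_splits)
  with w have wi: "w \<in> {min z y<..<max z y}" by (auto simp: I_def)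
  then have "w \<in> {0<..<L}" using sub by (auto simp: I_def)
  moreover have "(V has_real_derivative V' w) (at w within {0..L})"
    using V_C1 sub w by (auto simp: C1_on_def)
  ultimately have "(V has_real_derivative V' w) (at w)"
    by (simp add: at_within_Icc_at)
  then have "V' w = 0"
    by (rule DERIV_local_max[where d = "min (w - min z y) (max z y - w)"])
       (use wi wmax in \<open>auto simp: I_def abs_less_iff\<close>)
  then have "w = x0" using crit sub w by auto
  then have "V w \<le> V (min z y)" using V_min sub by (auto simp: I_def)
  then show False using \<open>V s \<le> V w\<close> A by (auto simp: min_def split: if_splits)
qed

lemma E0_eq: "E0 L V = V x0"
  by (simp add: E0_def x0_min)

text \<open>Connect p and y through a point z of the classically allowed region of V; between z and y
  the potential V stays below its endpoint values, so there W - E is only of order \<tau>.\<close>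
lemma agmon_action_diff_le:
  assumes W_cont: "continuous_on {0..L} W"
    and close: "\<And>x. x \<in> {0..L} \<Longrightarrow> \<bar>V x - W x\<bar> \<le> \<tau>"
    and y: "y \<in> {0..L}" "W y \<le> E" and p: "p \<in> {0..L}"
  shows "\<bar>agmon_action W E p - agmon_action W E y\<bar> \<le> agmon L V E p + L * (sqrt (2 * \<tau>) + sqrt (3 * \<tau>))"
proof -
  define E' where "E' = max E (V x0)"
  define g where "g t = sqrt (max (V t - E') 0)" for t
  have tau: "0 \<le> \<tau>" using close[OF x0_in] by linarith
  have E'_le: "E' \<le> E + \<tau>" and Vy: "V y \<le> E' + \<tau>"
    using close[OF y(1)] y V_min[OF y(1)] tau by (auto simp: E'_def)
  have "\<bar>agmon_action W E p - agmon_action W E y\<bar> - L * (sqrt (2 * \<tau>) + sqrt (3 * \<tau>))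
      \<le> (INF z\<in>KE L V E'. integral {min z p..max z p} g)"
  proof (rule cINF_greatest)
    show "KE L V E' \<noteq> {}" using x0_in by (auto simp: KE_def E'_def)
    fix z assume "z \<in> KE L V E'"
    then have z: "z \<in> {0..L}" and Vz: "V z \<le> E'" by (auto simp: KE_def)
    have sub: "{min z p..max z p} \<subseteq> {0..L}" using z p by auto
    have "integral {min z p..max z p} (\<lambda>s. sqrt (max (W s - E) 0))
        \<le> integral {min z p..max z p} g + sqrt (2 * \<tau>) * (max z p - min z p)"
    proof (rule integral_le_add_const)
      fix t assume "t \<in> {min z p..max z p}"
      with sub have "t \<in> {0..L}" by blast
      then have "max (W t - E) 0 \<le> max (V t - E') 0 + 2 * \<tau>"
        using close[of t] E'_le tau by auto
      then have "sqrt (max (W t - E) 0) \<le> sqrt (max (V t - E') 0 + 2 * \<tau>)" by (rule real_sqrt_le_mono)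
      also have "\<dots> \<le> g t + sqrt (2 * \<tau>)" unfolding g_def by (rule sqrt_add_le_add_sqrt) (use tau in auto)
      finally show "sqrt (max (W t - E) 0) \<le> g t + sqrt (2 * \<tau>)" .
    qed (use continuous_on_subset[OF _ sub] W_cont V_cont in \<open>auto simp: g_def intro!: continuous_intros\<close>)
    moreover have "sqrt (2 * \<tau>) * (max z p - min z p) \<le> sqrt (2 * \<tau>) * L"
      using z p tau by (intro mult_left_mono) auto
    ultimately have "\<bar>agmon_action W E p - agmon_action W E z\<bar> \<le> integral {min z p..max z p} g + L * sqrt (2 * \<tau>)"
      using agmon_action_diff_eq_integral[OF W_cont z p] by (simp add: mult.commute)
    moreover have "\<bar>agmon_action W E y - agmon_action W E z\<bar> \<le> sqrt (3 * \<tau>) * \<bar>y - z\<bar>"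
    proof (rule agmon_action_diff_le_const[OF W_cont z y(1)])
      fix t assume t: "t \<in> {min z y..max z y}"
      with z y(1) have "t \<in> {0..L}" by auto
      then show "W t - E \<le> 3 * \<tau>"
        using V_le_max_endpoints[OF z y(1) t] close[of t] Vz Vy E'_le by auto
    qed (use tau in simp)
    moreover have "sqrt (3 * \<tau>) * \<bar>y - z\<bar> \<le> L * sqrt (3 * \<tau>)"
      using z y tau by (simp add: mult.commute[of L] mult_left_mono abs_le_iff)
    ultimately show "\<bar>agmon_action W E p - agmon_action W E y\<bar> - L * (sqrt (2 * \<tau>) + sqrt (3 * \<tau>))
        \<le> integral {min z p..max z p} g"
      unfolding distrib_left by linarith
  qed
  then show ?thesis
    by (simp add: agmon_def E0_eq E'_def g_def[abs_def] Let_def)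
qed

end

section \<open>Solutions of the semiclassical equation\<close>

locale schroedinger_solution =
  fixes L \<epsilon> E :: real and W W' :: "real \<Rightarrow> real" and \<psi> \<psi>' :: "real \<Rightarrow> 'a::real_inner"
  assumes eps_pos: "0 < \<epsilon>"
    and W_deriv: "\<And>x. x \<in> {0..L} \<Longrightarrow> (W has_real_derivative W' x) (at x within {0..L})"
    and psi_deriv: "\<And>x. x \<in> {0..L} \<Longrightarrow> (\<psi> has_vector_derivative \<psi>' x) (at x within {0..L})"
    and psi'_deriv: "\<And>x. x \<in> {0..L} \<Longrightarrow>
      (\<psi>' has_vector_derivative ((W x - E) / \<epsilon>\<^sup>2) *\<^sub>R \<psi> x) (at x within {0..L})"
begin

lemma W_cont: "continuous_on {0..L} W"
  using W_deriv by (meson DERIV_continuous continuous_on_eq_continuous_within)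

lemma psi_cont: "continuous_on {0..L} \<psi>"
  using psi_deriv by (meson has_vector_derivative_continuous continuous_on_eq_continuous_within)

lemma exists_peak:
  assumes L: "0 < L" and dirichlet: "\<psi> 0 = 0" "\<psi> L = 0"
    and normalized: "integral {0..L} (\<lambda>x. (norm (\<psi> x))\<^sup>2) = 1"
  shows "\<exists>y\<in>{0<..<L}. W y \<le> E \<and> 1 / L \<le> (norm (\<psi> y))\<^sup>2"
proof -
  define P where "P x = (norm (\<psi> x))\<^sup>2" for x
  have P_cont: "continuous_on {0..L} P"
    unfolding P_def by (intro continuous_intros psi_cont)
  obtain y where y: "y \<in> {0..L}" and ymax: "\<And>t. t \<in> {0..L} \<Longrightarrow> P t \<le> P y"
    using continuous_attains_sup[OF _ _ P_cont] L by auto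
  have "integral {0..L} P \<le> integral {0..L} (\<lambda>_. 0) + P y * (L - 0)"
    using L P_cont ymax by (intro integral_le_add_const) auto
  then have Py: "1 / L \<le> P y" using normalized L by (simp add: P_def[abs_def] field_simps)
  then have "y \<noteq> 0" "y \<noteq> L" using L dirichlet by (auto simp: P_def)
  with y have y_in: "y \<in> {0<..<L}" by auto
  have "W y \<le> E"
  proof (rule ccontr)
    assume "\<not> W y \<le> E"
    have at: "at x within {0..L} = at x" if "x \<in> {0<..<L}" for x
      using that by (simp add: at_within_Icc_at)
    have "2 * (norm (\<psi>' y))\<^sup>2 + 2 * ((W y - E) / \<epsilon>\<^sup>2 * P y) \<le> 0"
    proof (rule second_derivative_nonpos_at_max[OF _ _ y_in])
      fix x assume "x \<in> {0<..<L}"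
      then show "(P has_real_derivative 2 * (\<psi> x \<bullet> \<psi>' x)) (at x)"
        using has_real_derivative_norm_squared[OF psi_deriv, of x] at[of x] by (simp add: P_def[abs_def])
    next
      show "((\<lambda>x. 2 * (\<psi> x \<bullet> \<psi>' x)) has_real_derivative
          2 * (norm (\<psi>' y))\<^sup>2 + 2 * ((W y - E) / \<epsilon>\<^sup>2 * P y)) (at y)"
        using DERIV_cmult[OF has_real_derivative_inner[OF psi_deriv psi'_deriv], of y 2] y at[OF y_in]
        by (simp add: P_def power2_norm_eq_inner inner_commute algebra_simps)
    qed (use ymax in auto)
    moreover have "0 < (W y - E) / \<epsilon>\<^sup>2 * P y"
      using \<open>\<not> W y \<le> E\<close> eps_pos Py L by (intro mult_pos_pos) (auto intro: less_le_trans[of 0 "1 / L"])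
    ultimately show False using zero_le_power2[of "norm (\<psi>' y)"] by linarith
  qed
  with y_in Py show ?thesis unfolding P_def by blast
qed

text \<open>The regularization \<eta> > 0 smooths |W - E| and keeps the weight of (norm \<psi>)^2 positive.\<close>
definition energy :: "real \<Rightarrow> real \<Rightarrow> real" where
  "energy \<eta> t = \<epsilon>\<^sup>2 * (norm (\<psi>' t))\<^sup>2 + sqrt ((W t - E)\<^sup>2 + \<eta>\<^sup>2) * (norm (\<psi> t))\<^sup>2"

lemma energy_nonneg: "0 \<le> energy \<eta> t"
  by (simp add: energy_def)

lemma energy_deriv:
  assumes eta: "0 < \<eta>" and t: "t \<in> {0..L}"
  defines "m \<equiv> sqrt ((W t - E)\<^sup>2 + \<eta>\<^sup>2)"
  shows "(energy \<eta> has_real_derivative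
      2 * ((W t - E) + m) * (\<psi> t \<bullet> \<psi>' t) + (W t - E) * W' t / m * (norm (\<psi> t))\<^sup>2) (at t within {0..L})"
proof -
  have pos: "0 < (W t - E)\<^sup>2 + \<eta>\<^sup>2" using eta by (simp add: add_nonneg_pos)
  have dm: "((\<lambda>t. sqrt ((W t - E)\<^sup>2 + \<eta>\<^sup>2)) has_real_derivative (W t - E) * W' t / m) (at t within {0..L})"
  proof -
    have "((\<lambda>t. (W t - E)\<^sup>2 + \<eta>\<^sup>2) has_real_derivative 2 * (W t - E) * W' t) (at t within {0..L})"
      using W_deriv[OF t] by (auto intro!: derivative_eq_intros)
    from DERIV_chain'[OF this DERIV_real_sqrt[OF pos]] show ?thesis
      by (rule DERIV_cong) (use pos in \<open>simp add: m_def divide_simps\<close>)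
  qed
  from DERIV_add[OF DERIV_cmult[OF has_real_derivative_norm_squared[OF psi'_deriv[OF t]]]
      DERIV_mult[OF dm has_real_derivative_norm_squared[OF psi_deriv[OF t]]]]
  show ?thesis
    unfolding energy_def[abs_def]
    by (rule DERIV_cong) (use eps_pos in \<open>simp add: m_def inner_commute field_simps\<close>)
qed

lemma energy_gronwall:
  assumes eta: "0 < \<eta>" and K: "\<And>x. x \<in> {0..L} \<Longrightarrow> \<bar>W' x\<bar> \<le> K"
    and x: "x \<in> {0..L}" and y: "y \<in> {0..L}"
  shows "energy \<eta> y * exp (- (2 / \<epsilon> * \<bar>agmon_action W E x - agmon_action W E y\<bar>
      + (sqrt \<eta> / \<epsilon> + K / \<eta>) * \<bar>x - y\<bar>)) \<le> energy \<eta> x"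
proof -
  define c where "c = sqrt \<eta> / \<epsilon> + K / \<eta>"
  define R where "R t = 2 / \<epsilon> * agmon_action W E t + c * t" for t
  have "0 \<le> K" using K[OF x] by linarith
  then have "0 \<le> c" using eps_pos eta by (simp add: c_def)
  have f_cont: "continuous_on {0..L} (\<lambda>s. sqrt (max (W s - E) 0))"
    by (intro continuous_intros W_cont)
  have gronwall: "energy \<eta> y * exp (- \<bar>R x - R y\<bar>) \<le> energy \<eta> x"
  proof (rule gronwall_abs_deriv_bound[OF energy_deriv[OF eta] _ _ energy_nonneg x y])
    fix t assume t: "t \<in> {0..L}"
    show "(R has_real_derivative 2 / \<epsilon> * sqrt (max (W t - E) 0) + c) (at t within {0..L})"
      unfolding R_def agmon_action_def
      using eps_pos by (auto intro!: derivative_eq_intros integral_has_real_derivative[OF f_cont t])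
    show "\<bar>2 * (W t - E + sqrt ((W t - E)\<^sup>2 + \<eta>\<^sup>2)) * (\<psi> t \<bullet> \<psi>' t)
        + (W t - E) * W' t / sqrt ((W t - E)\<^sup>2 + \<eta>\<^sup>2) * (norm (\<psi> t))\<^sup>2\<bar>
      \<le> (2 / \<epsilon> * sqrt (max (W t - E) 0) + c) * energy \<eta> t"
      using energy_rate_bound[OF eps_pos eta K[OF t] Cauchy_Schwarz_ineq2[of "\<psi> t" "\<psi>' t"]
          norm_ge_zero norm_ge_zero, of "W t - E"]
      unfolding energy_def c_def add.assoc .
  qed
  have "\<bar>R x - R y\<bar> \<le> 2 / \<epsilon> * \<bar>agmon_action W E x - agmon_action W E y\<bar> + c * \<bar>x - y\<bar>"
  proof -
    have "R x - R y = 2 / \<epsilon> * (agmon_action W E x - agmon_action W E y) + c * (x - y)"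
      by (simp add: R_def algebra_simps)
    moreover have "\<bar>2 / \<epsilon> * (agmon_action W E x - agmon_action W E y)\<bar>
        = 2 / \<epsilon> * \<bar>agmon_action W E x - agmon_action W E y\<bar>" "\<bar>c * (x - y)\<bar> = c * \<bar>x - y\<bar>"
      using eps_pos \<open>0 \<le> c\<close> by (simp_all only: abs_mult) simp_all
    ultimately show ?thesis by (metis abs_triangle_ineq)
  qed
  then have "energy \<eta> y * exp (- (2 / \<epsilon> * \<bar>agmon_action W E x - agmon_action W E y\<bar> + c * \<bar>x - y\<bar>))
      \<le> energy \<eta> y * exp (- \<bar>R x - R y\<bar>)"
    by (intro mult_left_mono energy_nonneg) simp
  with gronwall show ?thesis unfolding c_def by linarith
qed

lemma short_interval_mass:
  assumes Q: "\<And>x. x \<in> {0..L} \<Longrightarrow> \<bar>W x - E\<bar> + 1 \<le> Q" and "1 \<le> Q"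
    and eta: "0 < \<eta>" "\<eta> \<le> 1"
  defines "h \<equiv> \<epsilon> / (4 * sqrt Q)"
  assumes sub: "{x..x+h} \<subseteq> {0..L}"
  shows "h / (1024 * Q) * energy \<eta> x \<le> integral {x..x+h} (\<lambda>t. (norm (\<psi> t))\<^sup>2)"
proof -
  have h: "0 < h" using eps_pos \<open>1 \<le> Q\<close> by (simp add: h_def)
  have eps_h: "\<epsilon>\<^sup>2 = 16 * Q * h\<^sup>2"
    using \<open>1 \<le> Q\<close> by (simp add: h_def power_divide power_mult_distrib)
  have x: "x \<in> {0..L}" using sub h by auto
  define X where "X = (norm (\<psi> x))\<^sup>2 + h\<^sup>2 * (norm (\<psi>' x))\<^sup>2"
  have mass: "h / 64 * X \<le> integral {x..x+h} (\<lambda>t. (norm (\<psi> t))\<^sup>2)"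
    unfolding X_def
  proof (rule interval_mass_lower_bound[OF h])
    fix t assume "t \<in> {x..x+h}"
    with sub have t: "t \<in> {0..L}" by blast
    show "(\<psi> has_vector_derivative \<psi>' t) (at t within {x..x+h})"
      using psi_deriv[OF t] sub by (rule has_vector_derivative_within_subset)
    show "(\<psi>' has_vector_derivative ((W t - E) / \<epsilon>\<^sup>2) *\<^sub>R \<psi> t) (at t within {x..x+h})"
      using psi'_deriv[OF t] sub by (rule has_vector_derivative_within_subset)
    have "16 * h\<^sup>2 * \<bar>W t - E\<bar> \<le> \<epsilon>\<^sup>2"
      using Q[OF t] h unfolding eps_h by (simp add: mult_left_mono)
    then have "16 * h\<^sup>2 * \<bar>W t - E\<bar> * norm (\<psi> t) \<le> \<epsilon>\<^sup>2 * norm (\<psi> t)"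
      by (rule mult_right_mono) simp
    then have "16 * h\<^sup>2 * \<bar>W t - E\<bar> * norm (\<psi> t) / \<epsilon>\<^sup>2 \<le> norm (\<psi> t)"
      using eps_pos by (metis mult.commute pos_divide_le_eq zero_less_power)
    moreover have "16 * h\<^sup>2 * norm (((W t - E) / \<epsilon>\<^sup>2) *\<^sub>R \<psi> t) = 16 * h\<^sup>2 * \<bar>W t - E\<bar> * norm (\<psi> t) / \<epsilon>\<^sup>2"
      by (simp add: abs_divide)
    ultimately show "16 * h\<^sup>2 * norm (((W t - E) / \<epsilon>\<^sup>2) *\<^sub>R \<psi> t) \<le> norm (\<psi> t)"
      by linarith
  qed
  have "energy \<eta> x \<le> 16 * Q * X"
  proof -
    have "sqrt ((W x - E)\<^sup>2 + \<eta>\<^sup>2) \<le> \<bar>W x - E\<bar> + \<eta>"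
      using sqrt_add_le_add_sqrt[of "(W x - E)\<^sup>2" "\<eta>\<^sup>2"] eta by simp
    also have "\<dots> \<le> 16 * Q" using Q[OF x] eta by linarith
    finally have "sqrt ((W x - E)\<^sup>2 + \<eta>\<^sup>2) * (norm (\<psi> x))\<^sup>2 \<le> 16 * Q * (norm (\<psi> x))\<^sup>2"
      by (intro mult_right_mono) auto
    then show ?thesis by (simp add: energy_def eps_h X_def algebra_simps)
  qed
  then have "h / (1024 * Q) * energy \<eta> x \<le> h / (1024 * Q) * (16 * Q * X)"
    using h \<open>1 \<le> Q\<close> by (intro mult_left_mono) auto
  also have "\<dots> = h / 64 * X" using \<open>1 \<le> Q\<close> by simp
  finally show ?thesis using mass by linarith
qed

lemma interval_mass:
  assumes Q: "\<And>x. x \<in> {0..L} \<Longrightarrow> \<bar>W x - E\<bar> + 1 \<le> Q"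
    and eta: "0 < \<eta>" "\<eta> \<le> 1" and s: "0 \<le> s" "s + len \<le> L" and eps_le: "\<epsilon> \<le> len"
    and lower: "\<And>x. x \<in> {s..s+len} \<Longrightarrow> \<gamma> \<le> energy \<eta> x" and "0 \<le> \<gamma>"
  shows "len * \<gamma> / (2048 * Q) \<le> integral {s..s+len} (\<lambda>x. (norm (\<psi> x))\<^sup>2)"
proof -
  define P where "P x = (norm (\<psi> x))\<^sup>2" for x
  define h where "h = \<epsilon> / (4 * sqrt Q)"
  define N where "N = nat \<lfloor>len / h\<rfloor>"
  have "1 \<le> Q" using Q[of s] s eps_pos eps_le by auto
  have "len * 1 \<le> len * sqrt Q"
    using eps_pos eps_le \<open>1 \<le> Q\<close> by (intro mult_left_mono) auto
  then have "\<epsilon> \<le> len * sqrt Q" using eps_le by linarith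
  then have h: "0 < h" "h \<le> len / 4"
    using eps_pos eps_le \<open>1 \<le> Q\<close> by (auto simp: h_def field_simps)
  have N_le: "real N * h \<le> len" and N_ge: "len / 2 \<le> real N * h"
  proof -
    have "real N = of_int \<lfloor>len / h\<rfloor>" using h by (simp add: N_def)
    then have "len / h - 1 < real N" "real N \<le> len / h" by linarith+
    then show "real N * h \<le> len" "len / 2 \<le> real N * h" using h by (simp_all add: field_simps)
  qed
  have P_cont: "continuous_on {s..s+len} P"
    unfolding P_def using s by (intro continuous_intros continuous_on_subset[OF psi_cont]) auto
  have "len * \<gamma> / (2048 * Q) = len / 2 * (\<gamma> / (1024 * Q))" by simp
  also have "\<dots> \<le> real N * h * (\<gamma> / (1024 * Q))"
    using N_ge \<open>0 \<le> \<gamma>\<close> \<open>1 \<le> Q\<close> by (intro mult_right_mono) auto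
  also have "\<dots> = real N * (h / (1024 * Q) * \<gamma>)" by simp
  also have "\<dots> \<le> integral {s..s + real N * h} P"
  proof (rule integral_ge_sum_of_pieces[OF h(1)])
    show "continuous_on {s..s + real N * h} P"
      using N_le by (intro continuous_on_subset[OF P_cont]) auto
    fix i assume "i < N"
    then have "real i * h + h \<le> real N * h"
      using h mult_right_mono[of "real i + 1" "real N" h] by (simp add: algebra_simps)
    then have sub: "{s + real i * h..s + real i * h + h} \<subseteq> {s..s+len}" using N_le h by auto
    have "h / (1024 * Q) * \<gamma> \<le> h / (1024 * Q) * energy \<eta> (s + real i * h)"
      using lower sub h \<open>1 \<le> Q\<close> by (intro mult_left_mono) auto
    also have "\<dots> \<le> integral {s + real i * h..s + real i * h + h} P"
      unfolding P_def h_def using sub s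
      by (intro short_interval_mass[OF Q \<open>1 \<le> Q\<close> eta]) (auto simp: h_def)
    finally show "h / (1024 * Q) * \<gamma> \<le> integral {s + real i * h..s + real i * h + h} P" .
  qed
  also have "\<dots> \<le> integral {s..s+len} P"
    using N_le h by (intro integral_subset_le integrable_continuous_real continuous_on_subset[OF P_cont])
      (auto simp: P_def)
  finally show ?thesis by (simp add: P_def[abs_def])
qed

end

lemma H2_eigenfunction_solution:
  fixes \<psi> \<psi>1 \<psi>2 :: "real \<Rightarrow> complex"
  assumes eps: "0 < \<epsilon>" and H2: "H2_on L \<psi> \<psi>1 \<psi>2" and W: "C1_on L W W'"
    and eq: "AE x in lebesgue. x \<in> {0..L} \<longrightarrow>
      - complex_of_real (\<epsilon>\<^sup>2) * \<psi>2 x + complex_of_real (W x) * \<psi> x = complex_of_real E * \<psi> x"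
  shows "schroedinger_solution L \<epsilon> E W W' \<psi> \<psi>1"
proof
  define g where "g x = ((W x - E) / \<epsilon>\<^sup>2) *\<^sub>R \<psi> x" for x
  show psi_deriv: "(\<psi> has_vector_derivative \<psi>1 x) (at x within {0..L})" if "x \<in> {0..L}" for x
    using H2 that by (simp add: H2_on_def)
  show "(W has_real_derivative W' x) (at x within {0..L})" if "x \<in> {0..L}" for x
    using W that by (simp add: C1_on_def)
  then have "continuous_on {0..L} W"
    by (meson DERIV_continuous continuous_on_eq_continuous_within)
  moreover have "continuous_on {0..L} \<psi>"
    using psi_deriv by (meson has_vector_derivative_continuous continuous_on_eq_continuous_within)
  ultimately have g_cont: "continuous_on {0..L} g"
    unfolding g_def using eps by (intro continuous_intros) auto
  obtain N where N: "N \<in> null_sets lebesgue"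
    and eqN: "\<And>x. x \<in> {0..L} \<Longrightarrow> x \<notin> N \<Longrightarrow> \<psi>2 x = g x"
  proof -
    from eq obtain N where "N \<in> null_sets lebesgue" and exceptional: "{x \<in> space lebesgue. \<not> (x \<in> {0..L} \<longrightarrow>
        - complex_of_real (\<epsilon>\<^sup>2) * \<psi>2 x + complex_of_real (W x) * \<psi> x = complex_of_real E * \<psi> x)} \<subseteq> N"
      by (elim AE_E) blast
    then show ?thesis
    proof (intro that[of N])
      fix x assume "x \<in> {0..L}" "x \<notin> N"
      with exceptional have "complex_of_real (\<epsilon>\<^sup>2) * \<psi>2 x = complex_of_real (W x - E) * \<psi> x"
        by (auto simp: algebra_simps)
      then have "\<psi>2 x = complex_of_real (W x - E) * \<psi> x / complex_of_real (\<epsilon>\<^sup>2)"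
        using eps by (simp add: eq_divide_eq mult.commute)
      then show "\<psi>2 x = g x" by (simp add: g_def scaleR_conv_of_real)
    qed
  qed
  have integral_g: "integral {0..x} g = \<psi>1 x - \<psi>1 0" if "x \<in> {0..L}" for x
  proof (rule integral_unique, rule has_integral_spike)
    show "negligible N" using N by (simp add: negligible_iff_null_sets)
    show "(\<psi>2 has_integral \<psi>1 x - \<psi>1 0) {0..x}" using H2 that by (simp add: H2_on_def)
  qed (use eqN that in auto)
  have primitive: "((\<lambda>u. \<psi>1 0 + integral {0..u} g) has_vector_derivative g x) (at x within {0..L})"
    if "x \<in> {0..L}" for x
    using integral_has_vector_derivative[OF g_cont that] by (auto intro!: derivative_eq_intros)
  show "(\<psi>1 has_vector_derivative ((W x - E) / \<epsilon>\<^sup>2) *\<^sub>R \<psi> x) (at x within {0..L})"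
    if "x \<in> {0..L}" for x
    using has_vector_derivative_transform[OF that _ primitive[OF that]] integral_g by (simp add: g_def)
qed (rule eps)

locale near_single_well_eigenfunction =
  single_well L V V' x0 + schroedinger_solution L \<epsilon> E W W' \<psi> \<psi>'
  for L V V' x0 \<epsilon> E W W' and \<psi> \<psi>' :: "real \<Rightarrow> 'a::real_inner" +
  fixes Vmax \<tau> K :: real
  assumes L_pos: "0 < L"
    and V_bound: "\<And>x. x \<in> {0..L} \<Longrightarrow> \<bar>V x\<bar> \<le> Vmax"
    and W_close: "\<And>x. x \<in> {0..L} \<Longrightarrow> \<bar>V x - W x\<bar> \<le> \<tau>" and tau_le_1: "\<tau> \<le> 1"
    and W'_bound: "\<And>x. x \<in> {0..L} \<Longrightarrow> \<bar>W' x\<bar> \<le> K"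
    and dirichlet: "\<psi> 0 = 0" "\<psi> L = 0"
    and normalized: "integral {0..L} (\<lambda>x. (norm (\<psi> x))\<^sup>2) = 1"
begin

lemma Vmax_nonneg: "0 \<le> Vmax"
  using V_bound[of 0] L_pos by auto

lemma W_bound: "x \<in> {0..L} \<Longrightarrow> \<bar>W x\<bar> \<le> Vmax + 1"
  using V_bound[of x] W_close[of x] tau_le_1 by linarith

lemma density_peak: obtains y where "y \<in> {0..L}" "W y \<le> E" "1 / L \<le> (norm (\<psi> y))\<^sup>2"
proof -
  from exists_peak[OF L_pos dirichlet normalized]
  obtain y where "y \<in> {0<..<L}" "W y \<le> E" "1 / L \<le> (norm (\<psi> y))\<^sup>2" by blast
  then show ?thesis by (intro that[of y]) auto
qed

lemma E_ge_minus_Vmax: "- Vmax - 1 \<le> E"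
proof -
  obtain y where "y \<in> {0..L}" "W y \<le> E" by (rule density_peak)
  then show ?thesis using W_bound[of y] by linarith
qed

lemma energy_at_peak:
  assumes eta: "0 < \<eta>" "\<eta> \<le> 1"
  obtains y where "y \<in> {0..L}" "W y \<le> E" "(\<bar>E\<bar> + 1) * (\<eta> / ((Vmax + 3) * L)) \<le> energy \<eta> y"
proof -
  obtain y where y: "y \<in> {0..L}" "W y \<le> E" and peak_y: "1 / L \<le> (norm (\<psi> y))\<^sup>2"
    by (rule density_peak)
  define m where "m = sqrt ((W y - E)\<^sup>2 + \<eta>\<^sup>2)"
  have m: "\<eta> \<le> m" "\<bar>W y - E\<bar> \<le> m" unfolding m_def using eta by (simp_all add: real_le_rsqrt)
  have "\<bar>E\<bar> + 1 \<le> Vmax + 2 + m" using W_bound[OF y(1)] m by linarith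
  then have "(\<bar>E\<bar> + 1) * \<eta> \<le> (Vmax + 2) * \<eta> + m * \<eta>"
    using eta by (simp add: mult_right_mono distrib_right[symmetric])
  also have "\<dots> \<le> (Vmax + 2) * m + m * 1"
    using eta m Vmax_nonneg by (intro add_mono mult_left_mono) auto
  finally have "(\<bar>E\<bar> + 1) * \<eta> / ((Vmax + 3) * L) \<le> (Vmax + 3) * m / ((Vmax + 3) * L)"
    using L_pos Vmax_nonneg by (intro divide_right_mono) (auto simp: algebra_simps)
  then have "(\<bar>E\<bar> + 1) * (\<eta> / ((Vmax + 3) * L)) \<le> m / L"
    using Vmax_nonneg by simp
  also have "\<dots> \<le> m * (norm (\<psi> y))\<^sup>2"
    using mult_left_mono[OF peak_y, of m] m eta by simp
  also have "\<dots> \<le> energy \<eta> y" by (simp add: energy_def m_def)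
  finally show ?thesis using y that by blast
qed

lemma energy_lower_bound:
  assumes eta: "0 < \<eta>" "\<eta> \<le> 1" and x: "x \<in> {0..L}" and y0: "y0 \<in> {0..L}"
  shows "(\<bar>E\<bar> + 1) * (\<eta> / ((Vmax + 3) * L)) * exp (- (2 / \<epsilon> * (agmon L V E y0
      + \<bar>agmon_action W E x - agmon_action W E y0\<bar> + L * (sqrt (2 * \<tau>) + sqrt (3 * \<tau>)))
      + (sqrt \<eta> / \<epsilon> + K / \<eta>) * L)) \<le> energy \<eta> x"
proof -
  obtain y where y: "y \<in> {0..L}" "W y \<le> E"
    and energy_y: "(\<bar>E\<bar> + 1) * (\<eta> / ((Vmax + 3) * L)) \<le> energy \<eta> y"
    using energy_at_peak[OF eta] by blast
  define A where "A = agmon_action W E"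
  define c where "c = sqrt \<eta> / \<epsilon> + K / \<eta>"
  have "\<bar>A x - A y\<bar> \<le> \<bar>A x - A y0\<bar> + \<bar>A y0 - A y\<bar>" by linarith
  also have "\<bar>A y0 - A y\<bar> \<le> agmon L V E y0 + L * (sqrt (2 * \<tau>) + sqrt (3 * \<tau>))"
    unfolding A_def by (rule agmon_action_diff_le[OF W_cont W_close y y0])
  finally have "2 / \<epsilon> * \<bar>A x - A y\<bar> + c * \<bar>x - y\<bar> \<le> 2 / \<epsilon> * (agmon L V E y0
      + \<bar>A x - A y0\<bar> + L * (sqrt (2 * \<tau>) + sqrt (3 * \<tau>))) + c * L"
    using x y eps_pos eta W'_bound[OF x] by (intro add_mono mult_left_mono) (auto simp: c_def)
  then have "exp (- (2 / \<epsilon> * (agmon L V E y0 + \<bar>A x - A y0\<bar> + L * (sqrt (2 * \<tau>) + sqrt (3 * \<tau>)))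
      + c * L)) \<le> exp (- (2 / \<epsilon> * \<bar>A x - A y\<bar> + c * \<bar>x - y\<bar>))"
    by simp
  from mult_mono[OF energy_y this energy_nonneg] have "(\<bar>E\<bar> + 1) * (\<eta> / ((Vmax + 3) * L))
      * exp (- (2 / \<epsilon> * (agmon L V E y0 + \<bar>A x - A y0\<bar> + L * (sqrt (2 * \<tau>) + sqrt (3 * \<tau>))) + c * L))
    \<le> energy \<eta> y * exp (- (2 / \<epsilon> * \<bar>A x - A y\<bar> + c * \<bar>x - y\<bar>))"
    by simp
  also have "\<dots> \<le> energy \<eta> x"
    unfolding A_def c_def by (rule energy_gronwall[OF eta(1) W'_bound x y(1)])
  finally show ?thesis unfolding A_def c_def .
qed

lemma agmon_action_lipschitz:
  assumes u: "u \<in> {0..L}" and v: "v \<in> {0..L}"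
  shows "\<bar>agmon_action W E v - agmon_action W E u\<bar> \<le> sqrt (2 * Vmax + 2) * \<bar>v - u\<bar>"
proof (rule agmon_action_diff_le_const[OF W_cont u v])
  show "0 \<le> 2 * Vmax + 2" using Vmax_nonneg by simp
  fix t assume "t \<in> {min u v..max u v}"
  with u v have "t \<in> {0..L}" by auto
  then show "W t - E \<le> 2 * Vmax + 2" using W_bound[of t] E_ge_minus_Vmax by auto
qed

lemma local_mass_lower_bound:
  assumes eta: "0 < \<eta>" "\<eta> \<le> 1" and y0: "y0 \<in> {0..L}"
    and s: "0 \<le> s" "s + len \<le> L" and eps_le: "\<epsilon> \<le> len"
    and near: "\<And>x. x \<in> {s..s+len} \<Longrightarrow> \<bar>x - y0\<bar> \<le> len"
  shows "len * \<eta> / (2048 * (Vmax + 2) * (Vmax + 3) * L) * exp (- (2 / \<epsilon> * (agmon L V E y0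
      + sqrt (2 * Vmax + 2) * len + L * (sqrt (2 * \<tau>) + sqrt (3 * \<tau>))) + (sqrt \<eta> / \<epsilon> + K / \<eta>) * L))
    \<le> integral {s..s+len} (\<lambda>x. (norm (\<psi> x))\<^sup>2)"
proof -
  define X where "X = 2 / \<epsilon> * (agmon L V E y0 + sqrt (2 * Vmax + 2) * len
      + L * (sqrt (2 * \<tau>) + sqrt (3 * \<tau>))) + (sqrt \<eta> / \<epsilon> + K / \<eta>) * L"
  define \<gamma> where "\<gamma> = (\<bar>E\<bar> + 1) * (\<eta> / ((Vmax + 3) * L)) * exp (- X)"
  define Q where "Q = (\<bar>E\<bar> + 1) * (Vmax + 2)"
  have Q: "\<bar>W x - E\<bar> + 1 \<le> Q" if "x \<in> {0..L}" for x
  proof -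
    have "0 \<le> Vmax * \<bar>E\<bar>" using Vmax_nonneg by simp
    then show ?thesis using W_bound[OF that] by (simp add: Q_def algebra_simps)
  qed
  have "0 \<le> \<gamma>" using eta L_pos Vmax_nonneg by (simp add: \<gamma>_def)
  have "\<gamma> \<le> energy \<eta> x" if x: "x \<in> {s..s+len}" for x
  proof -
    have x': "x \<in> {0..L}" using x s by auto
    have "sqrt (2 * Vmax + 2) * \<bar>x - y0\<bar> \<le> sqrt (2 * Vmax + 2) * len"
      using near[OF x] Vmax_nonneg by (intro mult_left_mono) auto
    with agmon_action_lipschitz[OF y0 x']
    have "\<bar>agmon_action W E x - agmon_action W E y0\<bar> \<le> sqrt (2 * Vmax + 2) * len" by linarith
    then have "2 / \<epsilon> * (agmon L V E y0 + \<bar>agmon_action W E x - agmon_action W E y0\<bar>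
        + L * (sqrt (2 * \<tau>) + sqrt (3 * \<tau>))) \<le> 2 / \<epsilon> * (agmon L V E y0 + sqrt (2 * Vmax + 2) * len
        + L * (sqrt (2 * \<tau>) + sqrt (3 * \<tau>)))"
      using eps_pos by (intro mult_left_mono) auto
    then have "exp (- X) \<le> exp (- (2 / \<epsilon> * (agmon L V E y0 + \<bar>agmon_action W E x - agmon_action W E y0\<bar>
        + L * (sqrt (2 * \<tau>) + sqrt (3 * \<tau>))) + (sqrt \<eta> / \<epsilon> + K / \<eta>) * L))"
      unfolding X_def exp_le_cancel_iff by linarith
    then have "\<gamma> \<le> (\<bar>E\<bar> + 1) * (\<eta> / ((Vmax + 3) * L)) * exp (- (2 / \<epsilon> * (agmon L V E y0
        + \<bar>agmon_action W E x - agmon_action W E y0\<bar> + L * (sqrt (2 * \<tau>) + sqrt (3 * \<tau>)))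
        + (sqrt \<eta> / \<epsilon> + K / \<eta>) * L))"
      unfolding \<gamma>_def using eta L_pos Vmax_nonneg by (intro mult_left_mono) auto
    also have "\<dots> \<le> energy \<eta> x" by (rule energy_lower_bound[OF eta x' y0])
    finally show ?thesis .
  qed
  with interval_mass[OF Q eta s eps_le _ \<open>0 \<le> \<gamma>\<close>]
  have "len * \<gamma> / (2048 * Q) \<le> integral {s..s+len} (\<lambda>x. (norm (\<psi> x))\<^sup>2)" by blast
  moreover have "len * \<gamma> / (2048 * Q)
      = len * \<eta> / (2048 * (Vmax + 2) * (Vmax + 3) * L) * exp (- X)"
  proof -
    have "len * \<gamma> / (2048 * Q) = (\<bar>E\<bar> + 1) * (len * (\<eta> / ((Vmax + 3) * L)) * exp (- X))
        / ((\<bar>E\<bar> + 1) * (2048 * (Vmax + 2)))"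
      by (simp add: \<gamma>_def Q_def mult_ac)
    also have "\<dots> = len * (\<eta> / ((Vmax + 3) * L)) * exp (- X) / (2048 * (Vmax + 2))"
      by (rule mult_divide_mult_cancel_left) simp
    finally show ?thesis by simp
  qed
  ultimately show ?thesis unfolding X_def by simp
qed

lemma boundary_agmon_lower_bound:
  assumes eta: "0 < \<eta>" "\<eta> \<le> 1" and p: "p \<in> {0..L}" "\<psi> p = 0"
    and small: "\<epsilon> * (K * L / \<eta> + \<bar>ln (\<eta> / ((Vmax + 3) * L))\<bar>) \<le> \<delta>"
    and slack: "2 * (L * (sqrt (2 * \<tau>) + sqrt (3 * \<tau>))) + sqrt \<eta> * L \<le> \<delta>"
  shows "(\<bar>E\<bar> + 1) * exp (- (2 / \<epsilon>) * (agmon L V E p + \<delta>)) \<le> \<epsilon>\<^sup>2 * (norm (\<psi>' p))\<^sup>2"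
proof -
  have "exp (- (2 / \<epsilon>) * (agmon L V E p + \<delta>)) \<le> \<eta> / ((Vmax + 3) * L) * exp (- (2 / \<epsilon>
      * (agmon L V E p + \<bar>agmon_action W E p - agmon_action W E p\<bar> + L * (sqrt (2 * \<tau>) + sqrt (3 * \<tau>)))
      + (sqrt \<eta> / \<epsilon> + K / \<eta>) * L))"
    using eta L_pos Vmax_nonneg
    by (intro exp_absorb_prefactor[OF _ eps_pos small slack] divide_pos_pos mult_pos_pos)
      (auto simp: field_simps)
  then have "(\<bar>E\<bar> + 1) * exp (- (2 / \<epsilon>) * (agmon L V E p + \<delta>)) \<le> (\<bar>E\<bar> + 1) * (\<eta> / ((Vmax + 3) * L)
      * exp (- (2 / \<epsilon> * (agmon L V E p + \<bar>agmon_action W E p - agmon_action W E p\<bar>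
      + L * (sqrt (2 * \<tau>) + sqrt (3 * \<tau>))) + (sqrt \<eta> / \<epsilon> + K / \<eta>) * L)))"
    by (rule mult_left_mono) simp
  also have "\<dots> \<le> energy \<eta> p"
    using energy_lower_bound[OF eta p(1) p(1)] by (simp only: mult.assoc)
  finally show ?thesis using p by (simp add: energy_def)
qed

lemma mass_agmon_lower_bound:
  assumes eta: "0 < \<eta>" "\<eta> \<le> 1" and y0: "y0 \<in> {0..L}"
    and s: "0 \<le> s" "s + len \<le> L" and eps_le: "\<epsilon> \<le> len" and "len \<le> \<delta>"
    and near: "\<And>x. x \<in> {s..s+len} \<Longrightarrow> \<bar>x - y0\<bar> \<le> len"
    and small: "\<epsilon> * (K * L / \<eta> + \<bar>ln (len * \<eta> / (2048 * (Vmax + 2) * (Vmax + 3) * L))\<bar>) \<le> \<delta>"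
    and slack: "2 * (L * (sqrt (2 * \<tau>) + sqrt (3 * \<tau>))) + sqrt \<eta> * L \<le> \<delta>"
  shows "exp (- (2 / \<epsilon>) * (agmon L V E y0 + (sqrt (2 * Vmax + 2) + 1) * \<delta>))
    \<le> integral {s..s+len} (\<lambda>x. (norm (\<psi> x))\<^sup>2)"
proof -
  have "0 < len" using eps_pos eps_le by linarith
  have "agmon L V E y0 + sqrt (2 * Vmax + 2) * len + \<delta>
      \<le> agmon L V E y0 + (sqrt (2 * Vmax + 2) + 1) * \<delta>"
    using \<open>len \<le> \<delta>\<close> Vmax_nonneg by (simp add: mult_left_mono distrib_right)
  then have "- (2 / \<epsilon>) * (agmon L V E y0 + (sqrt (2 * Vmax + 2) + 1) * \<delta>)
      \<le> - (2 / \<epsilon>) * (agmon L V E y0 + sqrt (2 * Vmax + 2) * len + \<delta>)"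
    using eps_pos by (intro mult_left_mono_neg) auto
  then have "exp (- (2 / \<epsilon>) * (agmon L V E y0 + (sqrt (2 * Vmax + 2) + 1) * \<delta>))
      \<le> exp (- (2 / \<epsilon>) * (agmon L V E y0 + sqrt (2 * Vmax + 2) * len + \<delta>))"
    by simp
  also have "\<dots> \<le> len * \<eta> / (2048 * (Vmax + 2) * (Vmax + 3) * L) * exp (- (2 / \<epsilon> * (agmon L V E y0
      + sqrt (2 * Vmax + 2) * len + L * (sqrt (2 * \<tau>) + sqrt (3 * \<tau>))) + (sqrt \<eta> / \<epsilon> + K / \<eta>) * L))"
    using eta L_pos Vmax_nonneg \<open>0 < len\<close>
    by (intro exp_absorb_prefactor[OF _ eps_pos small slack] divide_pos_pos mult_pos_pos)
      (auto simp: field_simps)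
  also have "\<dots> \<le> integral {s..s+len} (\<lambda>x. (norm (\<psi> x))\<^sup>2)"
    by (rule local_mass_lower_bound[OF eta y0 s eps_le near])
  finally show ?thesis .
qed

end

definition agmon_estimates ::
    "real \<Rightarrow> (real \<Rightarrow> real) \<Rightarrow> real \<Rightarrow> real \<Rightarrow> real \<Rightarrow> real \<Rightarrow> real \<Rightarrow> (real \<Rightarrow> 'a::real_inner) \<Rightarrow> (real \<Rightarrow> 'a) \<Rightarrow> bool"
  where "agmon_estimates L V D y0 \<delta> \<epsilon> E \<psi> \<psi>' \<longleftrightarrow>
    (\<exists>s t. {s..t} \<subseteq> {y0 - \<delta><..<y0 + \<delta>} \<inter> {0..L} \<and>
       exp (- (2 / \<epsilon>) * (agmon L V E y0 + D * \<delta>)) \<le> integral {s..t} (\<lambda>x. (norm (\<psi> x))\<^sup>2)) \<and>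
    (\<forall>p\<in>{0, L}. (\<bar>E\<bar> + 1) * exp (- (2 / \<epsilon>) * (agmon L V E p + \<delta>)) \<le> \<epsilon>\<^sup>2 * (norm (\<psi>' p))\<^sup>2)"

lemma (in single_well) uniform_agmon_estimates:
  assumes L: "0 < L" and V_bound: "\<And>x. x \<in> {0..L} \<Longrightarrow> \<bar>V x\<bar> \<le> Vmax"
    and \<delta>: "0 < \<delta>" and y0: "y0 \<in> {0..L}"
  obtains \<tau>0 \<epsilon>0 where "0 < \<tau>0" "0 < \<epsilon>0"
    "\<And>\<epsilon> E W W' (\<psi> :: real \<Rightarrow> 'a::real_inner) \<psi>'. \<epsilon> < \<epsilon>0 \<Longrightarrow>
      schroedinger_solution L \<epsilon> E W W' \<psi> \<psi>' \<Longrightarrow>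
      (\<forall>x\<in>{0..L}. \<bar>V x - W x\<bar> \<le> \<tau>0 \<and> \<bar>V' x - W' x\<bar> \<le> \<tau>0) \<Longrightarrow>
      \<psi> 0 = 0 \<Longrightarrow> \<psi> L = 0 \<Longrightarrow> integral {0..L} (\<lambda>x. (norm (\<psi> x))\<^sup>2) = 1 \<Longrightarrow>
      agmon_estimates L V (sqrt (2 * Vmax + 2) + 1) y0 \<delta> \<epsilon> E \<psi> \<psi>'"
proof -
  obtain Kv where Kv: "\<And>x. x \<in> {0..L} \<Longrightarrow> \<bar>V' x\<bar> \<le> Kv"
    using continuous_on_compact_bound[OF compact_Icc, of 0 L V'] V_C1 unfolding C1_on_def real_norm_def
    by blast
  obtain \<eta> \<tau>0 where eta: "0 < \<eta>" "\<eta> \<le> 1" and "0 < \<tau>0" "\<tau>0 \<le> 1"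
    and slack: "2 * (L * (sqrt (2 * \<tau>0) + sqrt (3 * \<tau>0))) + sqrt \<eta> * L \<le> \<delta>"
    using regularization_parameters[OF L \<delta>] by blast
  define K where "K = Kv + 1"
  define len where "len = min \<delta> L / 2"
  define cb where "cb = \<eta> / ((Vmax + 3) * L)"
  define cm where "cm = len * \<eta> / (2048 * (Vmax + 2) * (Vmax + 3) * L)"
  \<comment> \<open>small enough to absorb the prefactors cb, cm and exp (K L / \<eta>) into exp (\<delta> / \<epsilon>)\<close>
  define \<epsilon>0 where "\<epsilon>0 = min len (\<delta> / (K * L / \<eta> + \<bar>ln cb\<bar> + \<bar>ln cm\<bar> + 1))"
  have len: "0 < len" "len \<le> \<delta>" "len < \<delta>" "2 * len \<le> L" using \<delta> L by (auto simp: len_def)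
  obtain s where s: "0 \<le> s" "s + len \<le> L" and near: "\<And>x. x \<in> {s..s+len} \<Longrightarrow> \<bar>x - y0\<bar> \<le> len"
    using interval_near_point[OF y0] len by (metis less_imp_le)
  have denom: "0 < K * L / \<eta> + \<bar>ln cb\<bar> + \<bar>ln cm\<bar> + 1"
    using Kv[OF x0_in] L eta by (simp add: K_def add_nonneg_pos)
  then have "0 < \<epsilon>0" using len \<delta> by (simp add: \<epsilon>0_def)
  show ?thesis
  proof (rule that[OF \<open>0 < \<tau>0\<close> \<open>0 < \<epsilon>0\<close>])
    fix \<epsilon> E W W' and \<psi> \<psi>' :: "real \<Rightarrow> 'a"
    assume "\<epsilon> < \<epsilon>0" and sol: "schroedinger_solution L \<epsilon> E W W' \<psi> \<psi>'"
      and "\<forall>x\<in>{0..L}. \<bar>V x - W x\<bar> \<le> \<tau>0 \<and> \<bar>V' x - W' x\<bar> \<le> \<tau>0"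
      and dirichlet: "\<psi> 0 = 0" "\<psi> L = 0" and normalized: "integral {0..L} (\<lambda>x. (norm (\<psi> x))\<^sup>2) = 1"
    then have close: "\<bar>V x - W x\<bar> \<le> \<tau>0" "\<bar>V' x - W' x\<bar> \<le> \<tau>0" if "x \<in> {0..L}" for x
      using that by auto
    interpret near_single_well_eigenfunction L V V' x0 \<epsilon> E W W' \<psi> \<psi>' Vmax \<tau>0 K
    proof (unfold_locales)
      fix x assume x: "x \<in> {0..L}"
      show "\<bar>W' x\<bar> \<le> K" using close[OF x] Kv[OF x] \<open>\<tau>0 \<le> 1\<close> unfolding K_def by linarith
    qed (use sol L V_bound close dirichlet normalized \<open>\<tau>0 \<le> 1\<close> in \<open>auto simp: schroedinger_solution_def\<close>)
    have "\<epsilon> \<le> len" and "\<epsilon> * (K * L / \<eta> + \<bar>ln cb\<bar> + \<bar>ln cm\<bar> + 1) \<le> \<delta>"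
      using \<open>\<epsilon> < \<epsilon>0\<close> eps_pos denom by (auto simp: \<epsilon>0_def field_simps)
    moreover have "\<epsilon> * (K * L / \<eta> + \<bar>ln cb\<bar>) \<le> \<epsilon> * (K * L / \<eta> + \<bar>ln cb\<bar> + \<bar>ln cm\<bar> + 1)"
      "\<epsilon> * (K * L / \<eta> + \<bar>ln cm\<bar>) \<le> \<epsilon> * (K * L / \<eta> + \<bar>ln cb\<bar> + \<bar>ln cm\<bar> + 1)"
      using eps_pos by (intro mult_left_mono; simp)+
    ultimately have small: "\<epsilon> * (K * L / \<eta> + \<bar>ln cb\<bar>) \<le> \<delta>" "\<epsilon> * (K * L / \<eta> + \<bar>ln cm\<bar>) \<le> \<delta>"
      by linarith+
    have "{s..s+len} \<subseteq> {y0 - \<delta><..<y0 + \<delta>} \<inter> {0..L}"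
      using near len s by (force simp: abs_le_iff)
    moreover have "exp (- (2 / \<epsilon>) * (agmon L V E y0 + (sqrt (2 * Vmax + 2) + 1) * \<delta>))
        \<le> integral {s..s+len} (\<lambda>x. (norm (\<psi> x))\<^sup>2)"
      using mass_agmon_lower_bound[OF eta(1,2) y0 s \<open>\<epsilon> \<le> len\<close> len(2) near _ slack] small(2)
      by (simp add: cm_def)
    moreover have "(\<bar>E\<bar> + 1) * exp (- (2 / \<epsilon>) * (agmon L V E p + \<delta>)) \<le> \<epsilon>\<^sup>2 * (norm (\<psi>' p))\<^sup>2"
      if "p \<in> {0, L}" for p
      using boundary_agmon_lower_bound[OF eta(1,2) _ _ _ slack] small(1) that L dirichlet
      by (auto simp: cb_def)
    ultimately show "agmon_estimates L V (sqrt (2 * Vmax + 2) + 1) y0 \<delta> \<epsilon> E \<psi> \<psi>'"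
      unfolding agmon_estimates_def by blast
  qed
qed

lemma (in single_well) eigenfunction_agmon_estimates:
  fixes Veps Veps' :: "real \<Rightarrow> real \<Rightarrow> real"
  assumes L: "0 < L" and V_bound: "\<And>x. x \<in> {0..L} \<Longrightarrow> \<bar>V x\<bar> \<le> Vmax"
    and Veps_C1: "\<And>\<epsilon>. \<epsilon> \<in> {0<..1} \<Longrightarrow> C1_on L (Veps \<epsilon>) (Veps' \<epsilon>)"
    and conv: "((\<lambda>\<epsilon>. C1_dist L V V' (Veps \<epsilon>) (Veps' \<epsilon>)) \<longlongrightarrow> 0) (at_right 0)"
    and \<delta>: "0 < \<delta>" and y0: "y0 \<in> {0..L}"
  defines "D \<equiv> sqrt (2 * Vmax + 2) + 1"
  shows "\<exists>\<epsilon>0>0. \<epsilon>0 \<le> 1 \<and>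
     (\<forall>E \<epsilon> \<psi> \<psi>1 \<psi>2. \<epsilon> \<in> {0<..<\<epsilon>0} \<and>
        H2_on L \<psi> \<psi>1 \<psi>2 \<and> \<psi> 0 = 0 \<and> \<psi> L = 0 \<and>
        (AE x in lebesgue. x \<in> {0..L} \<longrightarrow>
           - complex_of_real (\<epsilon>\<^sup>2) * \<psi>2 x + complex_of_real (Veps \<epsilon> x) * \<psi> x
             = complex_of_real E * \<psi> x) \<and>
        L2norm {0..L} \<psi> = 1
      \<longrightarrow> L2norm ({y0 - \<delta><..<y0 + \<delta>} \<inter> {0..L}) \<psi>
             \<ge> exp (- (1 / \<epsilon>) * (agmon L V E y0 + D * \<delta>))
        \<and> \<epsilon> / sqrt (\<bar>E\<bar> + 1) * cmod (\<psi>1 0) \<ge> exp (- (1 / \<epsilon>) * (agmon L V E 0 + \<delta>))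
        \<and> \<epsilon> / sqrt (\<bar>E\<bar> + 1) * cmod (\<psi>1 L) \<ge> exp (- (1 / \<epsilon>) * (agmon L V E L + \<delta>)))"
proof -
  obtain \<tau>0 \<epsilon>0 where "0 < \<tau>0" "0 < \<epsilon>0" and estimates: "\<And>\<epsilon> E W W' (\<psi> :: real \<Rightarrow> complex) \<psi>'.
      \<epsilon> < \<epsilon>0 \<Longrightarrow> schroedinger_solution L \<epsilon> E W W' \<psi> \<psi>' \<Longrightarrow>
      \<forall>x\<in>{0..L}. \<bar>V x - W x\<bar> \<le> \<tau>0 \<and> \<bar>V' x - W' x\<bar> \<le> \<tau>0 \<Longrightarrow>
      \<psi> 0 = 0 \<Longrightarrow> \<psi> L = 0 \<Longrightarrow> integral {0..L} (\<lambda>x. (norm (\<psi> x))\<^sup>2) = 1 \<Longrightarrow>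
      agmon_estimates L V D y0 \<delta> \<epsilon> E \<psi> \<psi>'"
    using uniform_agmon_estimates[where 'a = complex, OF L V_bound \<delta> y0] unfolding D_def by blast
  obtain \<epsilon>1 where "0 < \<epsilon>1"
    and close: "\<forall>\<epsilon>>0. \<epsilon> < \<epsilon>1 \<longrightarrow> \<bar>C1_dist L V V' (Veps \<epsilon>) (Veps' \<epsilon>)\<bar> < \<tau>0"
    using conv[THEN tendstoD, OF \<open>0 < \<tau>0\<close>] by (auto simp: eventually_at_right_field dist_real_def)
  show ?thesis
  proof (intro exI[of _ "min 1 (min \<epsilon>0 \<epsilon>1)"] conjI allI impI; (elim conjE)?)
    show "0 < min 1 (min \<epsilon>0 \<epsilon>1)" "min 1 (min \<epsilon>0 \<epsilon>1) \<le> 1"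
      using \<open>0 < \<epsilon>0\<close> \<open>0 < \<epsilon>1\<close> by auto
    fix E \<epsilon> and \<psi> \<psi>1 \<psi>2 :: "real \<Rightarrow> complex"
    assume \<epsilon>: "\<epsilon> \<in> {0<..<min 1 (min \<epsilon>0 \<epsilon>1)}" and H2: "H2_on L \<psi> \<psi>1 \<psi>2"
      and dirichlet: "\<psi> 0 = 0" "\<psi> L = 0"
      and eq: "AE x in lebesgue. x \<in> {0..L} \<longrightarrow>
        - complex_of_real (\<epsilon>\<^sup>2) * \<psi>2 x + complex_of_real (Veps \<epsilon> x) * \<psi> x = complex_of_real E * \<psi> x"
      and normalized: "L2norm {0..L} \<psi> = 1"
    have W: "C1_on L (Veps \<epsilon>) (Veps' \<epsilon>)" using \<epsilon> by (intro Veps_C1) auto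
    have sol: "schroedinger_solution L \<epsilon> E (Veps \<epsilon>) (Veps' \<epsilon>) \<psi> \<psi>1"
      using \<epsilon> by (intro H2_eigenfunction_solution[OF _ H2 W eq]) auto
    have cont: "continuous_on {0..L} \<psi>" by (rule schroedinger_solution.psi_cont[OF sol])
    have "\<forall>x\<in>{0..L}. \<bar>V x - Veps \<epsilon> x\<bar> \<le> \<tau>0 \<and> \<bar>V' x - Veps' \<epsilon> x\<bar> \<le> \<tau>0"
      using C1_dist_bounds[OF V_C1 W] close \<epsilon>
        abs_ge_self[of "C1_dist L V V' (Veps \<epsilon>) (Veps' \<epsilon>)"] by fastforce
    moreover have "integral {0..L} (\<lambda>x. (norm (\<psi> x))\<^sup>2) = 1"
      using L2norm_continuous(2)[OF cont order_refl] normalized by simp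
    ultimately have "agmon_estimates L V D y0 \<delta> \<epsilon> E \<psi> \<psi>1"
      using \<epsilon> by (intro estimates[OF _ sol _ dirichlet]) auto
    then obtain s t where st: "{s..t} \<subseteq> {y0 - \<delta><..<y0 + \<delta>} \<inter> {0..L}"
      and mass: "exp (- (2 / \<epsilon>) * (agmon L V E y0 + D * \<delta>)) \<le> integral {s..t} (\<lambda>x. (norm (\<psi> x))\<^sup>2)"
      and flux: "\<And>p. p \<in> {0, L} \<Longrightarrow>
        (\<bar>E\<bar> + 1) * exp (- (2 / \<epsilon>) * (agmon L V E p + \<delta>)) \<le> \<epsilon>\<^sup>2 * (norm (\<psi>1 p))\<^sup>2"
      unfolding agmon_estimates_def by blast
    show "L2norm ({y0 - \<delta><..<y0 + \<delta>} \<inter> {0..L}) \<psi> \<ge> exp (- (1 / \<epsilon>) * (agmon L V E y0 + D * \<delta>))"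
      using exp_half_le_sqrt[OF mass] L2norm_ge_subinterval[OF cont st] by auto
    have "exp (- (1 / \<epsilon>) * (agmon L V E p + \<delta>)) \<le> \<epsilon> / sqrt (\<bar>E\<bar> + 1) * cmod (\<psi>1 p)"
      if "p \<in> {0, L}" for p
      using flux[OF that] \<epsilon> by (intro exp_half_le_scaled) auto
    then show "\<epsilon> / sqrt (\<bar>E\<bar> + 1) * cmod (\<psi>1 0) \<ge> exp (- (1 / \<epsilon>) * (agmon L V E 0 + \<delta>))"
      "\<epsilon> / sqrt (\<bar>E\<bar> + 1) * cmod (\<psi>1 L) \<ge> exp (- (1 / \<epsilon>) * (agmon L V E L + \<delta>))"
      by auto
  qed
qed

theorem lemma2p7:
  fixes L :: real and V V' :: "real \<Rightarrow> real" and Veps Veps' :: "real \<Rightarrow> real \<Rightarrow> real"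
    and x0 :: real
  assumes L_pos: "L > 0"
    and V_C1: "C1_on L V V'"
    and Veps_C1: "\<And>\<epsilon>. \<epsilon> \<in> {0<..1} \<Longrightarrow> C1_on L (Veps \<epsilon>) (Veps' \<epsilon>)"
    and conv: "((\<lambda>\<epsilon>. C1_dist L V V' (Veps \<epsilon>) (Veps' \<epsilon>)) \<longlongrightarrow> 0) (at_right 0)"
    and x0_in: "x0 \<in> {0<..<L}"
    and crit: "\<And>x. x \<in> {0..L} \<Longrightarrow> V' x = 0 \<longleftrightarrow> x = x0"
    and x0_min: "V x0 = (INF x\<in>{0..L}. V x)"
  shows "\<exists>D>0. \<forall>y0\<in>{0..L}. \<forall>\<delta>>0. \<exists>\<epsilon>0>0. \<epsilon>0 \<le> 1 \<and>
     (\<forall>E \<epsilon> \<psi> \<psi>1 \<psi>2. \<epsilon> \<in> {0<..<\<epsilon>0} \<and>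
        H2_on L \<psi> \<psi>1 \<psi>2 \<and> \<psi> 0 = 0 \<and> \<psi> L = 0 \<and>
        (AE x in lebesgue. x \<in> {0..L} \<longrightarrow>
           - complex_of_real (\<epsilon>\<^sup>2) * \<psi>2 x + complex_of_real (Veps \<epsilon> x) * \<psi> x
             = complex_of_real E * \<psi> x) \<and>
        L2norm {0..L} \<psi> = 1
      \<longrightarrow> L2norm ({y0 - \<delta><..<y0 + \<delta>} \<inter> {0..L}) \<psi>
             \<ge> exp (- (1 / \<epsilon>) * (agmon L V E y0 + D * \<delta>))
        \<and> \<epsilon> / sqrt (\<bar>E\<bar> + 1) * cmod (\<psi>1 0) \<ge> exp (- (1 / \<epsilon>) * (agmon L V E 0 + \<delta>))
        \<and> \<epsilon> / sqrt (\<bar>E\<bar> + 1) * cmod (\<psi>1 L) \<ge> exp (- (1 / \<epsilon>) * (agmon L V E L + \<delta>)))"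
proof -
  interpret single_well L V V' x0
    using V_C1 x0_in crit x0_min by unfold_locales auto
  obtain Vmax where Vmax: "\<And>x. x \<in> {0..L} \<Longrightarrow> \<bar>V x\<bar> \<le> Vmax"
    using continuous_on_compact_bound[OF compact_Icc V_cont] unfolding real_norm_def by blast
  have "0 < sqrt (2 * Vmax + 2) + 1"
    using Vmax[of x0] x0_in by (simp add: add_nonneg_pos)
  then show ?thesis
    using eigenfunction_agmon_estimates[OF L_pos Vmax Veps_C1 conv]
    by (intro exI[of _ "sqrt (2 * Vmax + 2) + 1"]) auto
qed

end
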